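(* Let $\alpha(n)=o(\log n)$ be a monotone non-decreasing function of $n$. There is an instance of fully dynamic load balancing (in the restricted assignment setting), with $n$ jobs for arbitrarily large $n$, such that any offline algorithm that maintains at all times a fractional schedule of the active jobs with makespan at most $\alpha(n)T^*$ must incur an amortized recourse of $n^{\Omega(1/\alpha(n))}$.
   Context: Fully dynamic load balancing with recourse (restricted assignment): there is a set $M$ of machines and a set $J$ of $n$ jobs; job $j$ has a size $p_j$ and a set of machines on which it may be placed, and placing it (or a fraction of it) on an allowed machine contributes $p_j$ (times the fraction) to that machine's load. Jobs arrive and depart over time, each job arriving exactly once and departing exactly once, for $2n$ events in total; it is guaranteed that at every time the active jobs admit a schedule of makespan at most a given $T^*$. A fractional schedule assigns to each active job $j$ nonnegative fractions on its allowed machines summing to $1$; its makespan is the maximum over machines of the total fractional load. Moving an $x$ fraction of a job from one machine to another incurs recourse $x$. An algorithm has amortized recourse $\beta$ if for every $t$ the total recourse during the first $t$ events is at most $\beta t$. An offline algorithm knows the entire event sequence in advance. *)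

theory Defs
  imports Complex_Main "HOL-Library.Landau_Symbols"
begin

text \<open>Job j arrives at event arr j and
 departs at event dep j; the 2n events are numbered 1..2n, each a single arrival or departure.\<close>

definition valid_events :: "nat \<Rightarrow> (nat \<Rightarrow> nat) \<Rightarrow> (nat \<Rightarrow> nat) \<Rightarrow> bool" where
  "valid_events n arr dep \<longleftrightarrow>
     (\<forall>j<n. arr j < dep j) \<and> inj_on arr {..<n} \<and> inj_on dep {..<n} \<and>
     arr ` {..<n} \<inter> dep ` {..<n} = {} \<and>
     arr ` {..<n} \<union> dep ` {..<n} = {1..2*n}"

definition active :: "nat \<Rightarrow> (nat \<Rightarrow> nat) \<Rightarrow> (nat \<Rightarrow> nat) \<Rightarrow> nat \<Rightarrow> nat set" where
  "active n arr dep t = {j. j < n \<and> arr j \<le> t \<and> t < dep j}"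

definition admits_schedule :: "nat set \<Rightarrow> (nat \<Rightarrow> real) \<Rightarrow> (nat \<Rightarrow> nat set) \<Rightarrow> nat set \<Rightarrow> real \<Rightarrow> bool" where
  "admits_schedule M p A J T \<longleftrightarrow>
     (\<exists>\<sigma>::nat \<Rightarrow> nat. (\<forall>j\<in>J. \<sigma> j \<in> A j) \<and>
        (\<forall>i\<in>M. (\<Sum>j\<in>{j\<in>J. \<sigma> j = i}. p j) \<le> T))"

definition valid_instance :: "nat set \<Rightarrow> nat \<Rightarrow> (nat \<Rightarrow> real) \<Rightarrow> (nat \<Rightarrow> nat set)
    \<Rightarrow> (nat \<Rightarrow> nat) \<Rightarrow> (nat \<Rightarrow> nat) \<Rightarrow> real \<Rightarrow> bool" where
  "valid_instance M n p A arr dep T \<longleftrightarrow>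
     finite M \<and> M \<noteq> {} \<and> (\<forall>j<n. 0 < p j \<and> A j \<subseteq> M \<and> A j \<noteq> {}) \<and>
     valid_events n arr dep \<and>
     (\<forall>t\<le>2*n. admits_schedule M p A (active n arr dep t) T)"

text \<open>Fractional schedule y (y j i = fraction of job j on machine i) of the job set J.\<close>
definition frac_schedule :: "nat set \<Rightarrow> (nat \<Rightarrow> nat set) \<Rightarrow> nat set \<Rightarrow> (nat \<Rightarrow> nat \<Rightarrow> real) \<Rightarrow> bool" where
  "frac_schedule M A J y \<longleftrightarrow>
     (\<forall>j\<in>J. (\<forall>i. 0 \<le> y j i) \<and> (\<forall>i. i \<notin> A j \<longrightarrow> y j i = 0) \<and> (\<Sum>i\<in>M. y j i) = 1)"

definition frac_load :: "(nat \<Rightarrow> real) \<Rightarrow> nat set \<Rightarrow> (nat \<Rightarrow> nat \<Rightarrow> real) \<Rightarrow> nat \<Rightarrow> real" where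
  "frac_load p J y i = (\<Sum>j\<in>J. p j * y j i)"

definition makespan :: "nat set \<Rightarrow> (nat \<Rightarrow> real) \<Rightarrow> nat set \<Rightarrow> (nat \<Rightarrow> nat \<Rightarrow> real) \<Rightarrow> real" where
  "makespan M p J y = Max ((\<lambda>i. frac_load p J y i) ` M)"

text \<open>Recourse of going from fractional schedule y0 to y1: for every job active in both,
 the minimum total fraction that must be moved between machines, i.e. half the L1 distance.\<close>
definition step_recourse :: "nat set \<Rightarrow> nat set \<Rightarrow> nat set \<Rightarrow> (nat \<Rightarrow> nat \<Rightarrow> real)
    \<Rightarrow> (nat \<Rightarrow> nat \<Rightarrow> real) \<Rightarrow> real" where
  "step_recourse M J0 J1 y0 y1 = (\<Sum>j\<in>J0 \<inter> J1. (\<Sum>i\<in>M. \<bar>y1 j i - y0 j i\<bar>) / 2)"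

text \<open>An (offline) algorithm is a sequence x of fractional schedules, x t being the schedule
 after the first t events, t = 0..2n.\<close>
definition total_recourse :: "nat set \<Rightarrow> nat \<Rightarrow> (nat \<Rightarrow> nat) \<Rightarrow> (nat \<Rightarrow> nat)
    \<Rightarrow> (nat \<Rightarrow> nat \<Rightarrow> nat \<Rightarrow> real) \<Rightarrow> nat \<Rightarrow> real" where
  "total_recourse M n arr dep x t =
     (\<Sum>s\<in>{1..t}. step_recourse M (active n arr dep (s - 1)) (active n arr dep s) (x (s - 1)) (x s))"

definition maintains_makespan :: "nat set \<Rightarrow> nat \<Rightarrow> (nat \<Rightarrow> real) \<Rightarrow> (nat \<Rightarrow> nat set)
    \<Rightarrow> (nat \<Rightarrow> nat) \<Rightarrow> (nat \<Rightarrow> nat) \<Rightarrow> (nat \<Rightarrow> nat \<Rightarrow> nat \<Rightarrow> real) \<Rightarrow> real \<Rightarrow> bool" where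
  "maintains_makespan M n p A arr dep x B \<longleftrightarrow>
     (\<forall>t\<le>2*n. frac_schedule M A (active n arr dep t) (x t) \<and>
               makespan M p (active n arr dep t) (x t) \<le> B)"

definition amortized_recourse :: "nat set \<Rightarrow> nat \<Rightarrow> (nat \<Rightarrow> nat) \<Rightarrow> (nat \<Rightarrow> nat)
    \<Rightarrow> (nat \<Rightarrow> nat \<Rightarrow> nat \<Rightarrow> real) \<Rightarrow> real \<Rightarrow> bool" where
  "amortized_recourse M n arr dep x \<beta> \<longleftrightarrow>
     (\<forall>t\<in>{1..2*n}. total_recourse M n arr dep x t \<le> \<beta> * real t)"

end

(*
  The jobs form a complete (2h)-ary tree of depth k that is processed depth first: the jobs of
  a node at level i, of total size 2^(k-i-1), stay active while its whole subtree is processed,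
  and may only run on a dyadic block of 2^(k-i) machines whose two halves are used alternately
  by consecutive children.  An integral schedule of makespan 1 exists at all times.

  For a fractional schedule of makespan B, the excess of a node at level i is the average load
  that the jobs of its strict ancestors put on its block, minus B - 1/2 - (k - i)/2.  It equals
  k/2 - B + 1/2 at the root, is at most 0 when a leaf is active, and when a child with even
  index hands over to the next one, the excesses of the two average to that of the parent.
  Hence the variations of the excess over all windows, weighted by (2h)^(-level), add up to at
  least k/2 - B + 1/2.  A change of excess is caused by recourse of ancestor jobs, and the
  weights are such that each unit of recourse is charged at most once.  The total recourse is
  therefore at least (h/2) (2h)^k (k/2 - B + 1/2) over (k + 2) (2h)^k events.  With
  B = alpha(n), k close to 4 alpha(n) and h large, the amortized recourse is at least
  h/16 >= n^(1/(10 alpha(n))).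
*)

theory Submission
  imports Defs
begin

lemma div_power_Suc: "(x::nat) div b ^ Suc m = x div b ^ m div b"
  by (simp only: power_Suc2 div_mult2_eq)

lemma div_power_Suc': "(x::nat) div b ^ Suc m = x div b div b ^ m"
  by (simp only: power_Suc div_mult2_eq)

lemma div_power_add: "(x::nat) div b ^ (m + n) = x div b ^ m div b ^ n"
  by (simp add: power_add div_mult2_eq)

lemma div_eq_iff_bounds: "0 < (m::nat) \<Longrightarrow> x div m = p \<longleftrightarrow> p * m \<le> x \<and> x < p * m + m"
  by (metis add.commute div_nat_eqI dividend_less_times_div
      mult.commute mult_Suc
      times_div_less_eq_dividend)

lemma div_power_Suc_eq_iff:
  assumes "0 < (b::nat)"
  shows "x div b ^ Suc m = r \<longleftrightarrow> (\<exists>j<b. x div b ^ m = r * b + j)"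
proof -
  have "y div b = r \<longleftrightarrow> (\<exists>j<b. y = r * b + j)" for y
    using assms div_eq_iff_bounds[OF assms, of y r]
    by (metis add_less_cancel_left le_add1 le_add_diff_inverse)
  then show ?thesis by (simp only: div_power_Suc)
qed

lemma sum_lessThan_mult_split:
  fixes f :: "nat \<Rightarrow> 'a::comm_monoid_add"
  shows "(\<Sum>r<N. \<Sum>j<D. f (r*D + j)) = (\<Sum>i<N*D. f i)"
proof -
  have "sum f {r*D..<r*D + D} = (\<Sum>j<D. f (r*D + j))" for r
    using sum.shift_bounds_nat_ivl[of f 0 "r*D" D] by (simp add: atLeast0LessThan add.commute)
  then show ?thesis using sum.nat_group[of f D N] by simp
qed

lemma sum_lessThan_double:
  fixes f :: "nat \<Rightarrow> 'a::comm_monoid_add"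
  shows "(\<Sum>j<2*n. f j) = (\<Sum>p<n. f (2*p) + f (2*p+1))"
proof (induction n)
  case (Suc n)
  have "2 * Suc n = Suc (Suc (2*n))" by simp
  then show ?case using Suc by (simp add: add.assoc)
qed simp

lemma sum_sum_restrict:
  fixes f :: "'a \<Rightarrow> 'b \<Rightarrow> 'c::comm_monoid_add"
  assumes "finite A'" "finite B'" "A \<subseteq> A'" "B \<subseteq> B'"
  shows "(\<Sum>a\<in>A'. \<Sum>b\<in>B'. if a \<in> A \<and> b \<in> B then f a b else 0) = (\<Sum>a\<in>A. \<Sum>b\<in>B. f a b)"
proof -
  have "(\<Sum>b\<in>B'. if a \<in> A \<and> b \<in> B then f a b else 0) = (if a \<in> A then \<Sum>b\<in>B. f a b else 0)" for a
    using sum.inter_restrict[OF assms(2), of "f a" B] assms(4) by (simp add: Int_absorb1)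
  then show ?thesis
    using sum.inter_restrict[OF assms(1), of "\<lambda>a. \<Sum>b\<in>B. f a b" A] assms(3) by (simp add: Int_absorb1)
qed

lemma sum_swap_nested:
  "(\<Sum>i\<in>I. \<Sum>r\<in>R i. \<Sum>s\<in>S. \<Sum>j\<in>J. f i r s j)
    = (\<Sum>s\<in>S. \<Sum>j\<in>J. \<Sum>i\<in>I. \<Sum>r\<in>R i. f i r s j)"
proof -
  have "(\<Sum>i\<in>I. \<Sum>r\<in>R i. \<Sum>s\<in>S. \<Sum>j\<in>J. f i r s j)
      = (\<Sum>i\<in>I. \<Sum>s\<in>S. \<Sum>r\<in>R i. \<Sum>j\<in>J. f i r s j)"
    by (rule sum.cong[OF refl]) (rule sum.swap)
  also have "\<dots> = (\<Sum>i\<in>I. \<Sum>s\<in>S. \<Sum>j\<in>J. \<Sum>r\<in>R i. f i r s j)"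
    by (intro sum.cong refl) (rule sum.swap)
  also have "\<dots> = (\<Sum>s\<in>S. \<Sum>i\<in>I. \<Sum>j\<in>J. \<Sum>r\<in>R i. f i r s j)"
    by (rule sum.swap)
  also have "\<dots> = (\<Sum>s\<in>S. \<Sum>j\<in>J. \<Sum>i\<in>I. \<Sum>r\<in>R i. f i r s j)"
    by (rule sum.cong[OF refl]) (rule sum.swap)
  finally show ?thesis .
qed

lemma abs_diff_le_sum_increments:
  fixes f :: "nat \<Rightarrow> real"
  assumes "t1 \<le> t2"
  shows "\<bar>f t2 - f t1\<bar> \<le> (\<Sum>s\<in>{Suc t1..t2}. \<bar>f s - f (s - 1)\<bar>)"
  using assms
proof (induction t2 rule: dec_induct)
  case (step t)
  have "\<bar>f (Suc t) - f t1\<bar> \<le> \<bar>f (Suc t) - f t\<bar> + \<bar>f t - f t1\<bar>" by simp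
  moreover have "{Suc t1..Suc t} = insert (Suc t) {Suc t1..t}" using step.hyps by auto
  ultimately show ?case using step.IH by simp
qed simp

lemma abs_sum_subset_diff_le_half_l1:
  fixes u v :: "'a \<Rightarrow> real"
  assumes "finite M" "A \<subseteq> M" "(\<Sum>z\<in>M. u z) = (\<Sum>z\<in>M. v z)"
  shows "\<bar>(\<Sum>z\<in>A. u z) - (\<Sum>z\<in>A. v z)\<bar> \<le> (\<Sum>z\<in>M. \<bar>u z - v z\<bar>) / 2"
proof -
  have split: "(\<Sum>z\<in>M. w z) = (\<Sum>z\<in>A. w z) + (\<Sum>z\<in>M - A. w z)" for w :: "'a \<Rightarrow> real"
    using sum.subset_diff[OF assms(2,1)] by (simp add: add.commute)
  have opposite: "(\<Sum>z\<in>A. u z - v z) = - (\<Sum>z\<in>M - A. u z - v z)"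
    using split[of "\<lambda>z. u z - v z"] assms(3) by (simp add: sum_subtractf)
  have "\<bar>\<Sum>z\<in>A. u z - v z\<bar> \<le> (\<Sum>z\<in>A. \<bar>u z - v z\<bar>)"
    and "\<bar>\<Sum>z\<in>M - A. u z - v z\<bar> \<le> (\<Sum>z\<in>M - A. \<bar>u z - v z\<bar>)"
    by (rule sum_abs)+
  moreover have "(\<Sum>z\<in>A. u z) - (\<Sum>z\<in>A. v z) = (\<Sum>z\<in>A. u z - v z)"
    by (simp add: sum_subtractf)
  ultimately show ?thesis
    using opposite split[of "\<lambda>z. \<bar>u z - v z\<bar>"] by linarith
qed

lemma geometric_sum_le_2:
  fixes q :: real
  assumes "0 \<le> q" "q \<le> 1/2"
  shows "(\<Sum>m<M. q^m) \<le> 2"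
proof -
  have "(\<Sum>m<M. q^m) = (1 - q^M) / (1 - q)" using assms sum_gp_strict[of q M] by simp
  also have "\<dots> \<le> 1 / (1 - q)"
    using assms by (intro divide_right_mono) auto
  also have "\<dots> \<le> 2" using assms by (simp add: field_simps)
  finally show ?thesis .
qed

section \<open>The instance\<close>

text \<open>Node \<open>(i, r)\<close> of the complete \<open>2h\<close>-ary tree of depth \<open>k\<close> has level \<open>i \<le> k\<close>, index
  \<open>r < (2h)\<^sup>i\<close> and children \<open>(i + 1, r (2h) + j)\<close>, \<open>j < 2h\<close>.  It carries the jobs \<open>(i, r, q)\<close>,
  \<open>q < njobs i\<close>.  The events are laid out depth first: the jobs of a node arrive during the
  first \<open>njobs i\<close> steps of its window of \<open>span i\<close> steps, the windows of its children follow one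
  after the other, and its jobs depart during the last \<open>njobs i\<close> steps.  An event is a pair
  of a job and \<open>True\<close> (arrival) or \<open>False\<close> (departure).\<close>

locale tree_instance =
  fixes h k :: nat
  assumes h_ge_2: "2 \<le> h"
begin

definition njobs :: "nat \<Rightarrow> nat" where
  "njobs i = (if i < k then 2^(k-i-1) * h^(k-i) else 1)"

definition span :: "nat \<Rightarrow> nat" where
  "span i = (k - i + 2) * (2*h)^(k-i)"

fun start :: "nat \<Rightarrow> nat \<Rightarrow> nat" where
  "start 0 r = 1"
| "start (Suc i) r = start i (r div (2*h)) + njobs i + (r mod (2*h)) * span (Suc i)"

abbreviation window :: "nat \<Rightarrow> nat \<Rightarrow> nat set" where
  "window i r \<equiv> {start i r ..< start i r + span i}"

abbreviation ancestor :: "nat \<Rightarrow> nat \<Rightarrow> nat \<Rightarrow> nat" where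
  "ancestor i' r' i \<equiv> r' div (2*h)^(i'-i)"

lemma two_h_pos: "0 < 2*h"
  using h_ge_2 by simp

lemma njobs_pos: "1 \<le> njobs i"
  using h_ge_2 by (simp add: njobs_def)

lemma njobs_leaf: "njobs k = 1"
  by (simp add: njobs_def)

lemma span_leaf: "span k = 2"
  by (simp add: span_def)

lemma two_njobs: "i < k \<Longrightarrow> 2 * njobs i = (2*h)^(k-i)"
proof -
  assume "i < k"
  then obtain m where m: "k - i = Suc m" by (metis Suc_diff_Suc)
  then have "njobs i = 2^m * h^Suc m"
    unfolding njobs_def using \<open>i < k\<close> by (simp only: m diff_Suc_1 if_True)
  then show ?thesis by (simp add: m power_mult_distrib)
qed

lemma span_Suc: "i < k \<Longrightarrow> span i = 2 * njobs i + 2*h * span (Suc i)"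
proof -
  assume ik: "i < k"
  then obtain m where m: "k - i = Suc m" by (metis Suc_diff_Suc)
  then have "k - Suc i = m" by simp
  have "Suc m + 2 = m + 3" by simp
  then have "span i = (m + 3) * (2*h)^Suc m"
    by (simp only: span_def m)
  also have "\<dots> = (2*h)^Suc m + 2*h * ((m + 2) * (2*h)^m)"
  proof -
    have "(m + 3) * (2*h*X) = 2*h*X + 2*h * ((m + 2) * X)" for X :: nat
      by (simp add: algebra_simps)
    then show ?thesis by (simp only: power_Suc)
  qed
  also have "\<dots> = 2 * njobs i + 2*h * span (Suc i)"
    using two_njobs[OF ik] unfolding span_def \<open>k - Suc i = m\<close> m by simp
  finally show ?thesis .
qed

lemma two_njobs_le_span: "i \<le> k \<Longrightarrow> 2 * njobs i \<le> span i"
  by (cases "i < k") (auto simp: span_Suc njobs_leaf span_leaf)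

lemma span_ge_2: "i \<le> k \<Longrightarrow> 2 \<le> span i"
  using two_njobs_le_span[of i] njobs_pos[of i] by simp

lemma start_child: "j < 2*h \<Longrightarrow> start (Suc i) (r * (2*h) + j) = start i r + njobs i + j * span (Suc i)"
  by simp

lemma start_pos: "1 \<le> start i r"
  by (induction i arbitrary: r) (simp_all add: trans_le_add1)

declare start.simps(2) [simp del]

lemma ancestor_Suc_iff:
  "i < i' \<Longrightarrow> ancestor i' r' i = r \<longleftrightarrow> (\<exists>j<2*h. ancestor i' r' (Suc i) = r * (2*h) + j)"
  using div_power_Suc_eq_iff[OF two_h_pos, of r' "i' - Suc i" r] by (simp add: Suc_diff_Suc)

lemma ancestor_trans:
  assumes "i \<le> i'" "i' \<le> i''"
  shows "ancestor i' (ancestor i'' r'' i') i = ancestor i'' r'' i"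
proof -
  have "i'' - i = (i'' - i') + (i' - i)" using assms by simp
  then show ?thesis by (simp only: div_power_add)
qed

definition arrival :: "nat \<times> nat \<times> nat \<Rightarrow> nat" where
  "arrival J = (case J of (i,r,q) \<Rightarrow> start i r + q)"

definition departure :: "nat \<times> nat \<times> nat \<Rightarrow> nat" where
  "departure J = (case J of (i,r,q) \<Rightarrow> start i r + span i - njobs i + q)"

definition event_time :: "(nat \<times> nat \<times> nat) \<times> bool \<Rightarrow> nat" where
  "event_time ev = (if snd ev then arrival (fst ev) else departure (fst ev))"

definition subtree_events :: "nat \<Rightarrow> nat \<Rightarrow> ((nat \<times> nat \<times> nat) \<times> bool) set" where
  "subtree_events i r = {((i',r',q),b). i \<le> i' \<and> i' \<le> k \<and> ancestor i' r' i = r \<and> q < njobs i'}"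

lemma subtree_events_leaf: "subtree_events k r = {((k,r,0),True), ((k,r,0),False)}"
  unfolding subtree_events_def using njobs_leaf by auto

lemma subtree_events_Suc:
  assumes "i < k"
  shows "subtree_events i r = ({((i,r,q),True) | q. q < njobs i} \<union> {((i,r,q),False) | q. q < njobs i})
           \<union> (\<Union>j<2*h. subtree_events (Suc i) (r*(2*h) + j))" (is "_ = ?own \<union> ?children")
proof (intro equalityI subsetI)
  fix ev assume "ev \<in> subtree_events i r"
  then obtain i' r' q b where ev: "ev = ((i',r',q),b)" "i \<le> i'" "i' \<le> k" "ancestor i' r' i = r" "q < njobs i'"
    unfolding subtree_events_def by auto
  show "ev \<in> ?own \<union> ?children"
  proof (cases "i' = i")
    case False
    then obtain j where "j < 2*h" "ancestor i' r' (Suc i) = r*(2*h) + j"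
      using ancestor_Suc_iff ev by (metis le_neq_implies_less)
    then show ?thesis using ev False unfolding subtree_events_def by auto
  qed (use ev in \<open>cases b; auto\<close>)
next
  fix ev assume "ev \<in> ?own \<union> ?children"
  then show "ev \<in> subtree_events i r"
  proof
    assume "ev \<in> ?children"
    then obtain j i' r' q b where "j < 2*h" "ev = ((i',r',q),b)" "Suc i \<le> i'" "i' \<le> k"
      "ancestor i' r' (Suc i) = r*(2*h) + j" "q < njobs i'"
      unfolding subtree_events_def by auto
    then show ?thesis using ancestor_Suc_iff[of i i' r' r] unfolding subtree_events_def by auto
  qed (use assms in \<open>auto simp: subtree_events_def\<close>)
qed

lemma bij_betw_children_events:
  assumes "\<And>j. j < 2*h \<Longrightarrow> bij_betw event_time (subtree_events (Suc i) (r*(2*h)+j))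
                   (window (Suc i) (r*(2*h)+j))"
  shows "m \<le> 2*h \<Longrightarrow> bij_betw event_time (\<Union>j<m. subtree_events (Suc i) (r*(2*h) + j))
             {start i r + njobs i ..< start i r + njobs i + m * span (Suc i)}"
proof (induction m)
  case (Suc m)
  then have m: "m < 2*h" by simp
  have "(\<Union>j<Suc m. subtree_events (Suc i) (r*(2*h) + j))
      = (\<Union>j<m. subtree_events (Suc i) (r*(2*h) + j)) \<union> subtree_events (Suc i) (r*(2*h) + m)"
    by (auto simp: lessThan_Suc)
  moreover have "{start i r + njobs i ..< start i r + njobs i + Suc m * span (Suc i)} =
      {start i r + njobs i ..< start i r + njobs i + m * span (Suc i)} \<union>
      {start i r + njobs i + m * span (Suc i) ..< start i r + njobs i + m * span (Suc i) + span (Suc i)}"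
    by auto
  moreover have "bij_betw event_time (subtree_events (Suc i) (r*(2*h)+m))
     {start i r + njobs i + m * span (Suc i) ..< start i r + njobs i + m * span (Suc i) + span (Suc i)}"
    using assms[OF m] by (simp only: start_child[OF m])
  then have "bij_betw event_time ((\<Union>j<m. subtree_events (Suc i) (r*(2*h) + j)) \<union> subtree_events (Suc i) (r*(2*h) + m))
     ({start i r + njobs i ..< start i r + njobs i + m * span (Suc i)} \<union>
      {start i r + njobs i + m * span (Suc i) ..< start i r + njobs i + m * span (Suc i) + span (Suc i)})"
    by (rule bij_betw_combine[OF Suc.IH[OF Suc_leD[OF Suc.prems]]]) auto
  ultimately show ?case by simp
qed (simp add: bij_betw_def)

lemma bij_betw_own_events:
  assumes "i < k"
  shows "bij_betw event_time ({((i,r,q),True) | q. q < njobs i} \<union> {((i,r,q),False) | q. q < njobs i})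
     ({start i r ..< start i r + njobs i} \<union> {start i r + span i - njobs i ..< start i r + span i})"
proof (rule bij_betw_combine)
  have span_i: "span i = 2 * njobs i + 2*h * span (Suc i)" using span_Suc[OF assms] .
  show "bij_betw event_time {((i,r,q),True) | q. q < njobs i} {start i r ..< start i r + njobs i}"
    by (rule bij_betw_byWitness[where f'="\<lambda>t. ((i,r,t - start i r),True)"])
       (auto simp: event_time_def arrival_def)
  show "bij_betw event_time {((i,r,q),False) | q. q < njobs i}
      {start i r + span i - njobs i ..< start i r + span i}"
    by (rule bij_betw_byWitness[where f'="\<lambda>t. ((i,r,t - (start i r + span i - njobs i)),False)"])
       (use span_i in \<open>auto simp: event_time_def departure_def\<close>)
  show "{start i r ..< start i r + njobs i} \<inter> {start i r + span i - njobs i ..< start i r + span i} = {}"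
    using span_i by auto
qed

lemma bij_betw_subtree_events: "i \<le> k \<Longrightarrow> bij_betw event_time (subtree_events i r) (window i r)"
proof (induction "k - i" arbitrary: i r)
  case 0
  then have ik: "i = k" by simp
  have "window k r = {start k r, start k r + 1}" using span_leaf by auto
  moreover have "event_time ((k,r,0),True) = start k r" "event_time ((k,r,0),False) = start k r + 1"
    by (auto simp: event_time_def arrival_def departure_def span_leaf njobs_leaf)
  ultimately show ?case unfolding ik subtree_events_leaf bij_betw_def by auto
next
  case (Suc m)
  then have ik: "i < k" by simp
  have span_i: "span i = 2 * njobs i + 2*h * span (Suc i)" using span_Suc[OF ik] .
  have children: "bij_betw event_time (\<Union>j<2*h. subtree_events (Suc i) (r*(2*h) + j))
             {start i r + njobs i ..< start i r + njobs i + 2*h * span (Suc i)}"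
  proof (rule bij_betw_children_events)
    fix j
    have "m = k - Suc i" using Suc.hyps(2) by simp
    from Suc.hyps(1)[OF this Suc_leI[OF ik]]
    show "bij_betw event_time (subtree_events (Suc i) (r*(2*h)+j)) (window (Suc i) (r*(2*h)+j))" .
  qed simp
  have own: "bij_betw event_time ({((i,r,q),True) | q. q < njobs i} \<union> {((i,r,q),False) | q. q < njobs i})
     ({start i r ..< start i r + njobs i} \<union> {start i r + span i - njobs i ..< start i r + span i})"
    using bij_betw_own_events[OF ik] .
  have "bij_betw event_time (({((i,r,q),True) | q. q < njobs i} \<union> {((i,r,q),False) | q. q < njobs i})
           \<union> (\<Union>j<2*h. subtree_events (Suc i) (r*(2*h) + j)))
     (({start i r ..< start i r + njobs i} \<union> {start i r + span i - njobs i ..< start i r + span i}) \<union>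
       {start i r + njobs i ..< start i r + njobs i + 2*h * span (Suc i)})"
    by (rule bij_betw_combine[OF own children]) (use span_i in auto)
  moreover have "({start i r ..< start i r + njobs i} \<union> {start i r + span i - njobs i ..< start i r + span i}) \<union>
       {start i r + njobs i ..< start i r + njobs i + 2*h * span (Suc i)} = window i r"
    using span_i by auto
  ultimately show ?case using subtree_events_Suc[OF ik] by simp
qed

definition Jobs :: "(nat \<times> nat \<times> nat) set" where
  "Jobs = {(i,r,q). i \<le> k \<and> r < (2*h)^i \<and> q < njobs i}"

lemma subtree_events_mono:
  assumes "i \<le> i'" "ancestor i' r' i = r"
  shows "subtree_events i' r' \<subseteq> subtree_events i r"
  using assms ancestor_trans[OF assms(1)] unfolding subtree_events_def by auto

lemma subtree_events_disjoint: "r1 \<noteq> r2 \<Longrightarrow> subtree_events i r1 \<inter> subtree_events i r2 = {}"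
  unfolding subtree_events_def by auto

lemma subtree_events_root: "subtree_events 0 0 = Jobs \<times> UNIV"
  using h_ge_2 unfolding subtree_events_def Jobs_def by (auto simp: div_eq_0_iff)

lemma subtree_events_subset_root: "r < (2*h)^i \<Longrightarrow> subtree_events i r \<subseteq> subtree_events 0 0"
  by (rule subtree_events_mono) (auto simp: div_eq_0_iff two_h_pos)

lemma inj_on_event_time: "inj_on event_time (subtree_events 0 0)"
  using bij_betw_subtree_events[of 0 0] by (simp add: bij_betw_def)

lemma event_time_subtree_events: "i \<le> k \<Longrightarrow> event_time ` subtree_events i r = window i r"
  using bij_betw_subtree_events by (simp add: bij_betw_def)

lemma windows_disjoint:
  assumes "i \<le> k" "r1 < (2*h)^i" "r2 < (2*h)^i" "r1 \<noteq> r2"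
  shows "window i r1 \<inter> window i r2 = {}"
proof -
  have "event_time ` subtree_events i r1 \<inter> event_time ` subtree_events i r2
      = event_time ` (subtree_events i r1 \<inter> subtree_events i r2)"
    by (rule inj_on_image_Int[OF inj_on_event_time, symmetric])
       (use subtree_events_subset_root assms in auto)
  then show ?thesis
    using event_time_subtree_events[OF assms(1)] subtree_events_disjoint[OF assms(4)] by simp
qed

lemma window_mono:
  assumes "i \<le> i'" "i' \<le> k" "ancestor i' r' i = r"
  shows "window i' r' \<subseteq> window i r"
  using event_time_subtree_events[of i' r'] event_time_subtree_events[of i r]
    subtree_events_mono[OF assms(1,3)] assms
  by (metis image_mono order.trans)

lemma window_nested:
  assumes "i < i'" "i' \<le> k" "ancestor i' r' i = r"
  shows "start i r + njobs i \<le> start i' r' \<and> start i' r' + span i' \<le> start i r + span i - njobs i"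
proof -
  obtain j where j: "j < 2*h" and child: "ancestor i' r' (Suc i) = r*(2*h) + j"
    using ancestor_Suc_iff[OF assms(1)] assms(3) by blast
  have "window i' r' \<subseteq> window (Suc i) (r*(2*h)+j)"
    by (rule window_mono) (use assms child in auto)
  moreover have "start i' r' \<in> window i' r'" using span_ge_2[OF assms(2)] by simp
  moreover have "(j+1) * span (Suc i) \<le> 2*h * span (Suc i)" using j by (intro mult_right_mono) auto
  ultimately show ?thesis
    using start_child[OF j, of i r] span_Suc[of i] assms by (auto simp: algebra_simps)
qed

lemma overlapping_windows_ancestor:
  assumes "i1 \<le> i2" "i2 \<le> k" "r1 < (2*h)^i1" "r2 < (2*h)^i2"
    "t \<in> window i1 r1" "t \<in> window i2 r2"
  shows "ancestor i2 r2 i1 = r1"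
proof -
  obtain ev1 where ev1: "ev1 \<in> subtree_events i1 r1" "event_time ev1 = t"
    using event_time_subtree_events[of i1 r1] assms by (metis imageE order.trans)
  obtain ev2 where ev2: "ev2 \<in> subtree_events i2 r2" "event_time ev2 = t"
    using event_time_subtree_events[of i2 r2] assms by (metis imageE)
  have "ev1 = ev2"
    using inj_on_event_time ev1 ev2 subtree_events_subset_root[OF assms(3)]
      subtree_events_subset_root[OF assms(4)]
    by (auto simp: inj_on_def)
  then obtain i'' r'' where "i2 \<le> i''" "ancestor i'' r'' i1 = r1" "ancestor i'' r'' i2 = r2"
    using ev1 ev2 unfolding subtree_events_def by auto
  with ancestor_trans[OF assms(1) this(1), of r''] show ?thesis by (simp only:)
qed

lemma finite_Jobs: "finite Jobs"
proof -
  have "njobs i \<le> (2*h)^k" for i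
  proof (cases "i < k")
    case True
    then have "njobs i \<le> (2*h)^(k-i)" using two_njobs[OF True] by simp
    also have "\<dots> \<le> (2*h)^k" by (rule power_increasing) (use h_ge_2 in auto)
    finally show ?thesis .
  qed (use njobs_def two_h_pos in \<open>simp add: Suc_leI\<close>)
  moreover have "(2*h)^i \<le> (2*h)^k" if "i \<le> k" for i
    by (rule power_increasing) (use that h_ge_2 in auto)
  ultimately have "Jobs \<subseteq> {..k} \<times> {..<(2*h)^k} \<times> {..<(2*h)^k}"
    unfolding Jobs_def by (auto intro: less_le_trans)
  then show ?thesis by (rule finite_subset) auto
qed

lemma card_Jobs: "2 * card Jobs = (k + 2) * (2*h)^k"
proof -
  have "card (subtree_events 0 0) = card Jobs * 2"
    unfolding subtree_events_root by (simp add: card_cartesian_product)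
  moreover have "card (subtree_events 0 0) = span 0"
    using bij_betw_subtree_events[of 0 0] bij_betw_same_card by fastforce
  ultimately show ?thesis by (simp add: span_def)
qed

lemma window_end_le:
  assumes "i \<le> k" "r < (2*h)^i"
  shows "start i r + span i \<le> 1 + 2 * card Jobs"
proof -
  have "window i r \<subseteq> window 0 0"
    by (rule window_mono) (use assms in \<open>auto simp: div_eq_0_iff two_h_pos\<close>)
  moreover have "start i r + span i - 1 \<in> window i r" using span_ge_2[OF assms(1)] by simp
  ultimately have "start i r + span i - 1 < 1 + span 0" by auto
  moreover have "span 0 = 2 * card Jobs" using card_Jobs by (simp add: span_def)
  ultimately show ?thesis using span_ge_2[OF assms(1)] by simp
qed

definition alive :: "nat \<Rightarrow> nat \<times> nat \<times> nat \<Rightarrow> bool" where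
  "alive t J \<longleftrightarrow> arrival J \<le> t \<and> t < departure J"

lemma ancestor_alive:
  assumes "i < i'" "i' \<le> k" "q < njobs i" "start i' r' \<le> s + 1" "s < start i' r' + span i'"
  shows "alive s (i, ancestor i' r' i, q)"
  using window_nested[OF assms(1,2) refl, of r'] assms
  unfolding alive_def arrival_def departure_def by auto

lemma own_alive:
  assumes "q < njobs i" "start i r + njobs i \<le> s + 1" "s < start i r + span i - njobs i"
  shows "alive s (i, r, q)"
  using assms unfolding alive_def arrival_def departure_def by auto

lemma alive_in_window: "alive t (i,r,q) \<Longrightarrow> q < njobs i \<Longrightarrow> i \<le> k \<Longrightarrow> t \<in> window i r"
  using two_njobs_le_span[of i] unfolding alive_def arrival_def departure_def by auto

text \<open>The jobs of node \<open>(i, r)\<close> may run on the dyadic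
  block of \<open>2\<^sup>k\<^sup>-\<^sup>i\<close> machines whose leading \<open>i\<close> binary digits are \<open>block_index i r\<close>; the child
  \<open>r (2h) + j\<close> gets the half of this block selected by the parity of \<open>j\<close>.\<close>

fun block_index :: "nat \<Rightarrow> nat \<Rightarrow> nat" where
  "block_index 0 r = 0"
| "block_index (Suc i) r = 2 * block_index i (r div (2*h)) + (r mod (2*h)) mod 2"

definition block :: "nat \<Rightarrow> nat \<Rightarrow> nat set" where
  "block i r = {x. x < 2^k \<and> x div 2^(k-i) = block_index i r}"

lemma block_index_less: "block_index i r < 2^i"
proof (induction i arbitrary: r)
  case (Suc i)
  have "block_index i (r div (2*h)) < 2^i" by (rule Suc.IH)
  moreover have "(r mod (2*h)) mod 2 < 2" by simp
  ultimately show ?case by simp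
qed simp

lemma block_interval:
  assumes "i \<le> k"
  shows "block i r = {block_index i r * 2^(k-i) ..< block_index i r * 2^(k-i) + 2^(k-i)}"
proof -
  have "(block_index i r + 1) * 2^(k-i) \<le> 2^i * 2^(k-i)"
    using block_index_less[of i r] by (intro mult_right_mono) auto
  also have "\<dots> = 2^k" using assms by (simp flip: power_add)
  finally have "block_index i r * 2^(k-i) + 2^(k-i) \<le> 2^k" by (simp add: algebra_simps)
  then show ?thesis unfolding block_def using div_eq_iff_bounds[of "2^(k-i)"] by auto
qed

lemma block_subset: "block i r \<subseteq> {..<2^k}"
  unfolding block_def by auto

lemma finite_block: "finite (block i r)"
  using block_subset finite_subset by blast

lemma block_leaf: "block k r = {block_index k r}"
  using block_interval[of k r] by simp

lemma block_child:
  assumes "i < k" "j < 2*h"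
  shows "block (Suc i) (r*(2*h)+j) = {x \<in> block i r. (x div 2^(k - Suc i)) mod 2 = j mod 2}"
proof -
  have "k - i = Suc (k - Suc i)" using assms by simp
  then have "x div 2^(k-i) = x div 2^(k - Suc i) div 2" for x :: nat
    by (simp only: div_power_Suc)
  moreover have "y = 2 * p + j mod 2 \<longleftrightarrow> y div 2 = p \<and> y mod 2 = j mod 2" for y p :: nat
  proof
    assume "y div 2 = p \<and> y mod 2 = j mod 2"
    then show "y = 2 * p + j mod 2" using div_mult_mod_eq[of y 2] by linarith
  qed simp
  ultimately show ?thesis
    using assms(2) unfolding block_def by auto
qed

lemma block_index_ancestor:
  "i \<le> i' \<Longrightarrow> block_index i' r' div 2^(i'-i) = block_index i (ancestor i' r' i)"
proof (induction i' arbitrary: r')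
  case (Suc i')
  show ?case
  proof (cases "i = Suc i'")
    case False
    then have "i \<le> i'" and i'_i: "Suc i' - i = Suc (i' - i)" using Suc.prems by auto
    have "block_index (Suc i') r' div 2^(Suc i' - i) = block_index i' (r' div (2*h)) div 2^(i'-i)"
      unfolding i'_i div_power_Suc' by simp
    also have "\<dots> = block_index i (ancestor (Suc i') r' i)"
      using Suc.IH[OF \<open>i \<le> i'\<close>] unfolding i'_i div_power_Suc' by simp
    finally show ?thesis .
  qed simp
qed simp

lemma block_mono:
  assumes "i \<le> i'" "i' \<le> k"
  shows "block i' r' \<subseteq> block i (ancestor i' r' i)"
proof
  fix x assume "x \<in> block i' r'"
  then have x: "x < 2^k" "x div 2^(k-i') = block_index i' r'" unfolding block_def by auto
  have "k - i = (k - i') + (i' - i)" using assms by simp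
  then have "x div 2^(k-i) = x div 2^(k-i') div 2^(i'-i)" by (simp only: div_power_add)
  then show "x \<in> block i (ancestor i' r' i)"
    using x block_index_ancestor[OF assms(1)] unfolding block_def by simp
qed

definition job_size :: "nat \<Rightarrow> real" where
  "job_size i = (if i < k then (1 / real h)^(k-i) else 1/2)"

lemma job_size_nonneg: "0 \<le> job_size i"
  unfolding job_size_def by simp

lemma njobs_job_size: "i < k \<Longrightarrow> real (njobs i) * job_size i = 2^(k - Suc i)"
proof -
  assume ik: "i < k"
  have "real (njobs i) = 2^(k - Suc i) * real h^(k-i)"
    unfolding njobs_def using ik by (simp add: Suc_diff_Suc)
  moreover have "real h^(k-i) * (1/real h)^(k-i) = 1" using h_ge_2 by (simp add: power_one_over)
  ultimately show ?thesis unfolding job_size_def using ik by simp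
qed

text \<open>The integral schedule of makespan 1 at time \<open>t\<close>: the jobs of an inner node fill, \<open>h\<^sup>k\<^sup>-\<^sup>i\<close>
  per machine, the half of its block not used by the child whose window contains \<open>t\<close>.\<close>

definition free_half :: "nat \<Rightarrow> nat \<Rightarrow> nat \<Rightarrow> nat" where
  "free_half t i r = 1 - ((t - (start i r + njobs i)) div span (Suc i)) mod 2"

definition sched :: "nat \<Rightarrow> nat \<times> nat \<times> nat \<Rightarrow> nat" where
  "sched t J = (case J of (i,r,q) \<Rightarrow>
     if i < k then block_index i r * 2^(k-i) + free_half t i r * 2^(k - Suc i) + q div h^(k-i)
     else block_index i r)"

lemma sched_inner:
  assumes "i < k" "q < njobs i"
  shows "sched t (i,r,q) \<in> block i r" "(sched t (i,r,q) div 2^(k - Suc i)) mod 2 = free_half t i r"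
proof -
  define Q :: nat where "Q = 2^(k - Suc i)"
  define z where "z = q div h^(k-i)"
  have two_Q: "2^(k-i) = 2 * Q" unfolding Q_def using assms(1) by (simp flip: power_Suc add: Suc_diff_Suc)
  have "njobs i = Q * h^(k-i)" unfolding njobs_def Q_def using assms(1) by (simp add: Suc_diff_Suc)
  then have z: "z < Q" unfolding z_def using assms(2) h_ge_2 by (simp add: div_less_iff_less_mult)
  have half: "free_half t i r \<le> 1" unfolding free_half_def by simp
  then have "free_half t i r * Q \<le> 1 * Q" by (rule mult_le_mono1)
  then have "free_half t i r * Q + z < 2 * Q" using z by linarith
  moreover have sched: "sched t (i,r,q) = (2 * block_index i r + free_half t i r) * Q + z"
    unfolding sched_def z_def Q_def using assms(1) two_Q Q_def by (simp add: algebra_simps)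
  ultimately show "sched t (i,r,q) \<in> block i r"
    unfolding block_interval[OF less_imp_le[OF assms(1)]] two_Q by (simp add: algebra_simps)
  have "sched t (i,r,q) div Q = 2 * block_index i r + free_half t i r"
    unfolding sched using z by simp
  then show "(sched t (i,r,q) div 2^(k - Suc i)) mod 2 = free_half t i r"
    unfolding Q_def[symmetric] using half by auto
qed

lemma sched_in_block:
  assumes "(i,r,q) \<in> Jobs"
  shows "sched t (i,r,q) \<in> block i r"
proof (cases "i < k")
  case True
  then show ?thesis using sched_inner(1) assms unfolding Jobs_def by auto
next
  case False
  then have "i = k" using assms unfolding Jobs_def by auto
  then show ?thesis using block_leaf[of r] by (simp add: sched_def)
qed

lemma sched_eq_same_node:
  assumes J1: "(i1,r1,q1) \<in> Jobs" and J2: "(i2,r2,q2) \<in> Jobs"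
    and "alive t (i1,r1,q1)" "alive t (i2,r2,q2)"
    and eq: "sched t (i1,r1,q1) = sched t (i2,r2,q2)" and "i1 \<le> i2"
  shows "i1 = i2 \<and> r1 = r2"
proof -
  have j1: "i1 \<le> k" "r1 < (2*h)^i1" "q1 < njobs i1" using J1 unfolding Jobs_def by auto
  have j2: "i2 \<le> k" "r2 < (2*h)^i2" "q2 < njobs i2" using J2 unfolding Jobs_def by auto
  have t1: "t \<in> window i1 r1" and t2: "t \<in> window i2 r2"
    using alive_in_window assms(3,4) j1 j2 by auto
  have anc: "ancestor i2 r2 i1 = r1"
    by (rule overlapping_windows_ancestor[OF \<open>i1 \<le> i2\<close> j2(1) j1(2) j2(2) t1 t2])
  show ?thesis
  proof (cases "i1 = i2")
    case False
    then have lt: "i1 < i2" using \<open>i1 \<le> i2\<close> by simp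
    then obtain j where j: "j < 2*h" and child: "ancestor i2 r2 (Suc i1) = r1*(2*h) + j"
      using ancestor_Suc_iff anc by blast
    have "window i2 r2 \<subseteq> window (Suc i1) (r1*(2*h)+j)"
      by (rule window_mono) (use lt j2 child in auto)
    then have "t \<in> {start i1 r1 + njobs i1 + j * span (Suc i1) ..<
        start i1 r1 + njobs i1 + j * span (Suc i1) + span (Suc i1)}"
      using t2 start_child[OF j] by auto
    then have "(t - (start i1 r1 + njobs i1)) div span (Suc i1) = j"
      using span_ge_2[of "Suc i1"] lt j2 by (auto simp: div_eq_iff_bounds)
    then have "(sched t (i1,r1,q1) div 2^(k - Suc i1)) mod 2 = 1 - j mod 2"
      using sched_inner(2)[of i1 q1 t r1] lt j1 j2 unfolding free_half_def by simp
    moreover have "sched t (i2,r2,q2) \<in> block (Suc i1) (r1*(2*h)+j)"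
      using sched_in_block[OF J2] block_mono[of "Suc i1" i2 r2] lt j2 child by auto
    then have "(sched t (i2,r2,q2) div 2^(k - Suc i1)) mod 2 = j mod 2"
      using block_child[of i1 j r1] lt j2 j by auto
    ultimately show ?thesis using eq by (cases "j mod 2 = 0") auto
  qed (use anc in simp)
qed

lemma sched_node_load_le_1:
  "real (card {q. q < njobs i \<and> sched t (i,r,q) = x}) * job_size i \<le> 1"
proof (cases "i < k")
  case True
  define H where "H = h^(k-i)"
  define b where "b = block_index i r * 2^(k-i) + free_half t i r * 2^(k - Suc i)"
  have H: "0 < H" "job_size i = 1 / real H"
    unfolding H_def job_size_def using h_ge_2 True by (simp_all add: power_one_over)
  have "{q. q < njobs i \<and> sched t (i,r,q) = x} \<subseteq> {q. q div H = x - b}"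
    using True unfolding sched_def b_def H_def by auto
  also have "\<dots> = {(x - b) * H ..< (x - b) * H + H}"
    using div_eq_iff_bounds[OF H(1)] by auto
  finally have "card {q. q < njobs i \<and> sched t (i,r,q) = x} \<le> H"
    using card_mono[of "{(x - b) * H ..< (x - b) * H + H}"] by fastforce
  then have "real (card {q. q < njobs i \<and> sched t (i,r,q) = x}) \<le> real H" by simp
  then show ?thesis unfolding H(2) using H(1) by (simp add: field_simps)
next
  case False
  then have "{q. q < njobs i \<and> sched t (i,r,q) = x} \<subseteq> {0}" unfolding njobs_def by auto
  then have "card {q. q < njobs i \<and> sched t (i,r,q) = x} \<le> 1"
    using card_mono[of "{0::nat}"] by fastforce
  then show ?thesis using False by (simp add: job_size_def)
qed

lemma sched_load_le_1: "(\<Sum>J\<in>{J\<in>Jobs. alive t J \<and> sched t J = x}. job_size (fst J)) \<le> 1"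
proof (cases "{J\<in>Jobs. alive t J \<and> sched t J = x} = {}")
  case False
  then obtain i r q0 where J0: "(i,r,q0) \<in> Jobs" "alive t (i,r,q0)" "sched t (i,r,q0) = x"
    by auto
  let ?Q = "{q. q < njobs i \<and> sched t (i,r,q) = x}"
  have sub: "{J\<in>Jobs. alive t J \<and> sched t J = x} \<subseteq> (\<lambda>q. (i,r,q)) ` ?Q"
  proof
    fix J assume J: "J \<in> {J\<in>Jobs. alive t J \<and> sched t J = x}"
    then obtain i' r' q where J': "J = (i',r',q)" "(i',r',q) \<in> Jobs" "alive t (i',r',q)" "sched t (i',r',q) = x"
      by (cases J) auto
    then have "i' = i \<and> r' = r"
      using sched_eq_same_node[of i r q0 i' r' q t] sched_eq_same_node[of i' r' q i r q0 t] J0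
      by (cases "i \<le> i'") auto
    then show "J \<in> (\<lambda>q. (i,r,q)) ` ?Q" using J' unfolding Jobs_def by auto
  qed
  have "(\<Sum>J\<in>{J\<in>Jobs. alive t J \<and> sched t J = x}. job_size (fst J))
      \<le> (\<Sum>J\<in>(\<lambda>q. (i,r,q)) ` ?Q. job_size (fst J))"
    by (rule sum_mono2[OF _ sub]) (auto simp: job_size_nonneg)
  also have "\<dots> = real (card ?Q) * job_size i"
    by (simp add: sum.reindex inj_on_def)
  also have "\<dots> \<le> 1" by (rule sched_node_load_le_1)
  finally show ?thesis .
next
  case True
  show ?thesis unfolding True by simp
qed

definition job_enum :: "nat \<Rightarrow> nat \<times> nat \<times> nat" where
  "job_enum = (SOME f. bij_betw f {..<card Jobs} Jobs)"

lemma bij_betw_job_enum: "bij_betw job_enum {..<card Jobs} Jobs"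
  using someI_ex[OF ex_bij_betw_nat_finite[OF finite_Jobs]] unfolding job_enum_def atLeast0LessThan .

lemma job_enum_in_Jobs: "j < card Jobs \<Longrightarrow> job_enum j \<in> Jobs"
  using bij_betw_job_enum by (auto simp: bij_betw_def)

lemma inj_on_job_enum: "inj_on job_enum {..<card Jobs}"
  using bij_betw_job_enum by (simp add: bij_betw_def)

lemma job_enum_image: "job_enum ` {..<card Jobs} = Jobs"
  using bij_betw_job_enum by (simp add: bij_betw_def)

definition size_of :: "nat \<Rightarrow> real" where
  "size_of j = job_size (fst (job_enum j))"

definition allowed :: "nat \<Rightarrow> nat set" where
  "allowed j = block (fst (job_enum j)) (fst (snd (job_enum j)))"

definition arr :: "nat \<Rightarrow> nat" where
  "arr j = arrival (job_enum j)"

definition dep :: "nat \<Rightarrow> nat" where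
  "dep j = departure (job_enum j)"

definition machines :: "nat set" where
  "machines = {..<2^k}"

lemma active_eq: "active (card Jobs) arr dep t = {j. j < card Jobs \<and> alive t (job_enum j)}"
  unfolding active_def alive_def arr_def dep_def by auto

lemma arr_event_time: "arr j = event_time (job_enum j, True)"
  by (simp add: arr_def event_time_def)

lemma dep_event_time: "dep j = event_time (job_enum j, False)"
  by (simp add: dep_def event_time_def)

lemma arrival_less_departure: "J \<in> Jobs \<Longrightarrow> arrival J < departure J"
  using two_njobs_le_span njobs_pos unfolding Jobs_def arrival_def departure_def
  by (fastforce simp: le_diff_conv2)

lemma event_time_job_enum_eq:
  assumes "j1 < card Jobs" "j2 < card Jobs"
    and "event_time (job_enum j1, b1) = event_time (job_enum j2, b2)"
  shows "j1 = j2 \<and> b1 = b2"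
proof -
  have "(job_enum j, b) \<in> subtree_events 0 0" if "j < card Jobs" for j b
    using job_enum_in_Jobs[OF that] subtree_events_root by simp
  then have "(job_enum j1, b1) = (job_enum j2, b2)"
    using inj_on_event_time assms by (meson inj_onD)
  then show ?thesis using inj_on_job_enum assms(1,2) by (simp add: inj_on_eq_iff)
qed

lemma arr_dep_image: "arr ` {..<card Jobs} \<union> dep ` {..<card Jobs} = {1..2 * card Jobs}"
proof -
  let ?E = "\<lambda>b. (\<lambda>j. (job_enum j, b)) ` {..<card Jobs}"
  have "subtree_events 0 0 = ?E True \<union> ?E False"
  proof
    show "subtree_events 0 0 \<subseteq> ?E True \<union> ?E False"
    proof
      fix ev assume "ev \<in> subtree_events 0 0"
      then obtain J b where ev: "ev = (J, b)" "J \<in> Jobs" unfolding subtree_events_root by auto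
      then obtain j where "j < card Jobs" "job_enum j = J" using job_enum_image by (metis imageE lessThan_iff)
      then show "ev \<in> ?E True \<union> ?E False" using ev by (cases b) auto
    qed
    show "?E True \<union> ?E False \<subseteq> subtree_events 0 0"
      unfolding subtree_events_root using job_enum_in_Jobs by auto
  qed
  then have "arr ` {..<card Jobs} \<union> dep ` {..<card Jobs} = event_time ` subtree_events 0 0"
    unfolding arr_event_time dep_event_time by (simp add: image_Un image_image)
  also have "\<dots> = {1..<Suc (2 * card Jobs)}"
    using event_time_subtree_events[of 0 0] card_Jobs by (simp add: span_def)
  also have "\<dots> = {1..2 * card Jobs}" by (rule atLeastLessThanSuc_atLeastAtMost)
  finally show ?thesis .
qed

lemma valid_events_tree: "valid_events (card Jobs) arr dep"
proof -
  have "j < card Jobs \<Longrightarrow> arr j < dep j" for j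
    using arrival_less_departure job_enum_in_Jobs unfolding arr_def dep_def by blast
  moreover have "inj_on arr {..<card Jobs}" "inj_on dep {..<card Jobs}"
    using event_time_job_enum_eq unfolding inj_on_def arr_event_time dep_event_time by blast+
  moreover have "arr ` {..<card Jobs} \<inter> dep ` {..<card Jobs} = {}"
  proof (rule ccontr)
    assume "arr ` {..<card Jobs} \<inter> dep ` {..<card Jobs} \<noteq> {}"
    then obtain j1 j2 where "j1 < card Jobs" "j2 < card Jobs" "arr j1 = dep j2" by auto
    then show False using event_time_job_enum_eq[of j1 j2 True False] unfolding arr_event_time dep_event_time by simp
  qed
  ultimately show ?thesis unfolding valid_events_def using arr_dep_image by blast
qed

lemma admits_schedule_tree: "admits_schedule machines size_of allowed (active (card Jobs) arr dep t) 1"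
  unfolding admits_schedule_def
proof (intro exI[of _ "\<lambda>j. sched t (job_enum j)"] conjI ballI)
  fix j assume "j \<in> active (card Jobs) arr dep t"
  then have "job_enum j \<in> Jobs" using active_eq job_enum_in_Jobs by auto
  then show "sched t (job_enum j) \<in> allowed j"
    unfolding allowed_def using sched_in_block by (cases "job_enum j") auto
next
  fix x
  let ?A = "{j \<in> active (card Jobs) arr dep t. sched t (job_enum j) = x}"
  have "inj_on job_enum ?A" using inj_on_job_enum by (rule inj_on_subset) (auto simp: active_eq)
  then have "(\<Sum>j\<in>?A. size_of j) = (\<Sum>J\<in>job_enum ` ?A. job_size (fst J))"
    unfolding size_of_def by (simp add: sum.reindex)
  also have "job_enum ` ?A = {J\<in>Jobs. alive t J \<and> sched t J = x}"
  proof
    show "{J\<in>Jobs. alive t J \<and> sched t J = x} \<subseteq> job_enum ` ?A"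
    proof
      fix J assume J: "J \<in> {J\<in>Jobs. alive t J \<and> sched t J = x}"
      then obtain j where "j < card Jobs" "job_enum j = J" using job_enum_image by force
      then show "J \<in> job_enum ` ?A" using J active_eq by auto
    qed
  qed (use job_enum_in_Jobs active_eq in auto)
  finally show "(\<Sum>j\<in>?A. size_of j) \<le> 1" using sched_load_le_1 by simp
qed

lemma valid_instance_tree: "valid_instance machines (card Jobs) size_of allowed arr dep 1"
  unfolding valid_instance_def
proof (intro conjI allI impI)
  show "finite machines" unfolding machines_def by simp
  have "0 \<in> machines" unfolding machines_def by simp
  then show "machines \<noteq> {}" by blast
  show "valid_events (card Jobs) arr dep" by (rule valid_events_tree)
  show "admits_schedule machines size_of allowed (active (card Jobs) arr dep t) 1" for t
    by (rule admits_schedule_tree)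
  fix j assume "j < card Jobs"
  obtain i r q where J: "job_enum j = (i,r,q)" by (cases "job_enum j") auto
  have "i \<le> k" using job_enum_in_Jobs[OF \<open>j < card Jobs\<close>] J unfolding Jobs_def by auto
  then show "allowed j \<noteq> {}" unfolding allowed_def J using block_interval[of i r] by auto
  show "0 < size_of j" unfolding size_of_def job_size_def using h_ge_2 by simp
  show "allowed j \<subseteq> machines" unfolding allowed_def machines_def using block_subset by simp
qed

definition ancestor_jobs :: "nat \<Rightarrow> nat \<Rightarrow> (nat \<times> nat \<times> nat) set" where
  "ancestor_jobs i r = {(i',r',q) \<in> Jobs. i' < i \<and> r' = ancestor i r i'}"

lemma finite_ancestor_jobs: "finite (ancestor_jobs i r)"
  unfolding ancestor_jobs_def by (rule finite_subset[OF _ finite_Jobs]) auto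

lemma ancestor_jobs_root: "ancestor_jobs 0 r = {}"
  unfolding ancestor_jobs_def by auto

lemma ancestor_jobs_child:
  assumes "i < k" "j < 2*h" "r < (2*h)^i"
  shows "ancestor_jobs (Suc i) (r*(2*h)+j) = ancestor_jobs i r \<union> (\<lambda>q. (i,r,q)) ` {..<njobs i}"
proof -
  have "ancestor (Suc i) (r*(2*h)+j) i' = ancestor i r i'" if "i' \<le> i" for i'
  proof -
    have "Suc i - i' = Suc (i - i')" using that by simp
    then have "ancestor (Suc i) (r*(2*h)+j) i' = (r*(2*h)+j) div (2*h) div (2*h)^(i - i')"
      by (simp only: div_power_Suc')
    then show ?thesis using assms(2) by simp
  qed
  then show ?thesis
    using assms unfolding ancestor_jobs_def Jobs_def by (auto simp: less_Suc_eq)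
qed

lemma ancestor_jobs_disjoint_own: "ancestor_jobs i r \<inter> (\<lambda>q. (i,r,q)) ` {..<njobs i} = {}"
  unfolding ancestor_jobs_def by auto

lemma ancestor_jobs_alive:
  assumes "J \<in> ancestor_jobs i' r'" "i' \<le> k" "start i' r' \<le> s + 1" "s < start i' r' + span i'"
  shows "alive s J"
  using assms ancestor_alive[of _ i' _ r' s] unfolding ancestor_jobs_def Jobs_def by auto

end

section \<open>The lower bound\<close>

locale bounded_run = tree_instance +
  fixes x :: "nat \<Rightarrow> nat \<Rightarrow> nat \<Rightarrow> real" and B :: real
  assumes bounded: "maintains_makespan machines (card Jobs) size_of allowed arr dep x B"
begin

definition job_index :: "nat \<times> nat \<times> nat \<Rightarrow> nat" where
  "job_index = inv_into {..<card Jobs} job_enum"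

lemma job_index_inverse: "J \<in> Jobs \<Longrightarrow> job_index J < card Jobs \<and> job_enum (job_index J) = J"
  unfolding job_index_def using job_enum_image inj_on_job_enum
  by (metis bij_betw_inv_into_right inj_on_imp_bij_betw inv_into_into lessThan_iff)

lemma job_index_job_enum: "j < card Jobs \<Longrightarrow> job_index (job_enum j) = j"
  unfolding job_index_def using inj_on_job_enum by (simp add: inv_into_f_f)

lemma job_index_active: "J \<in> Jobs \<Longrightarrow> alive t J \<Longrightarrow> job_index J \<in> active (card Jobs) arr dep t"
  using job_index_inverse active_eq by auto

definition frac :: "nat \<Rightarrow> nat \<times> nat \<times> nat \<Rightarrow> nat \<Rightarrow> real" where
  "frac t J z = x t (job_index J) z"

lemma frac_props:
  assumes "J \<in> Jobs" "alive t J" "t \<le> 2 * card Jobs"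
  shows "0 \<le> frac t J z" "(\<Sum>z\<in>machines. frac t J z) = 1"
    "z \<notin> block (fst J) (fst (snd J)) \<Longrightarrow> frac t J z = 0"
proof -
  have "frac_schedule machines allowed (active (card Jobs) arr dep t) (x t)"
    using bounded assms(3) unfolding maintains_makespan_def by auto
  moreover have "allowed (job_index J) = block (fst J) (fst (snd J))"
    unfolding allowed_def using job_index_inverse[OF assms(1)] by simp
  ultimately show "0 \<le> frac t J z" "(\<Sum>z\<in>machines. frac t J z) = 1"
    "z \<notin> block (fst J) (fst (snd J)) \<Longrightarrow> frac t J z = 0"
    using job_index_active[OF assms(1,2)] unfolding frac_schedule_def frac_def by auto
qed

lemma frac_sum_block:
  assumes "(i,r,q) \<in> Jobs" "alive t (i,r,q)" "t \<le> 2 * card Jobs"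
  shows "(\<Sum>z\<in>block i r. frac t (i,r,q) z) = 1"
proof -
  have "(\<Sum>z\<in>block i r. frac t (i,r,q) z) = (\<Sum>z\<in>machines. frac t (i,r,q) z)"
    by (rule sum.mono_neutral_left) (use frac_props[OF assms] block_subset in \<open>auto simp: machines_def\<close>)
  then show ?thesis using frac_props(2)[OF assms] by simp
qed

lemma alive_load_le_bound:
  assumes "t \<le> 2 * card Jobs" "z \<in> machines" "S \<subseteq> Jobs" "\<And>J. J \<in> S \<Longrightarrow> alive t J"
  shows "(\<Sum>J\<in>S. job_size (fst J) * frac t J z) \<le> B"
proof -
  let ?A = "active (card Jobs) arr dep t"
  have "inj_on job_index S" using job_index_inverse assms(3) by (metis inj_onI subsetD)
  then have "(\<Sum>J\<in>S. job_size (fst J) * frac t J z) = (\<Sum>j\<in>job_index ` S. size_of j * x t j z)"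
    using job_index_inverse assms(3) by (auto simp: sum.reindex size_of_def frac_def intro!: sum.cong)
  also have "\<dots> \<le> frac_load size_of ?A (x t) z"
    unfolding frac_load_def
  proof (rule sum_mono2)
    show "finite ?A" unfolding active_def by simp
    show "job_index ` S \<subseteq> ?A" using job_index_active assms(3,4) by auto
    have "frac_schedule machines allowed ?A (x t)"
      using bounded assms(1) unfolding maintains_makespan_def by auto
    then show "0 \<le> size_of j * x t j z" if "j \<in> ?A - job_index ` S" for j
      using that unfolding frac_schedule_def size_of_def job_size_def by auto
  qed
  also have "\<dots> \<le> makespan machines size_of ?A (x t)"
    unfolding makespan_def by (rule Max_ge) (use assms(2) in \<open>auto simp: machines_def\<close>)
  also have "\<dots> \<le> B" using bounded assms(1) unfolding maintains_makespan_def by auto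
  finally show ?thesis .
qed

definition ancestor_mass :: "nat \<Rightarrow> nat \<Rightarrow> nat \<Rightarrow> nat set \<Rightarrow> real" where
  "ancestor_mass t i r A = (\<Sum>J\<in>ancestor_jobs i r. job_size (fst J) * (\<Sum>z\<in>A. frac t J z))"

definition threshold :: "nat \<Rightarrow> real" where
  "threshold i = B - 1/2 - (real k - real i) / 2"

definition excess :: "nat \<Rightarrow> nat \<Rightarrow> nat \<Rightarrow> real" where
  "excess t i r = ancestor_mass t i r (block i r) / 2^(k-i) - threshold i"

lemma ancestor_mass_child:
  assumes "i < k" "j < 2*h" "r < (2*h)^i"
  shows "ancestor_mass t (Suc i) (r*(2*h)+j) A
    = ancestor_mass t i r A + (\<Sum>q<njobs i. job_size i * (\<Sum>z\<in>A. frac t (i,r,q) z))"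
proof -
  have "ancestor_mass t (Suc i) (r*(2*h)+j) A = ancestor_mass t i r A
      + (\<Sum>J\<in>(\<lambda>q. (i,r,q)) ` {..<njobs i}. job_size (fst J) * (\<Sum>z\<in>A. frac t J z))"
    unfolding ancestor_mass_def ancestor_jobs_child[OF assms]
    by (rule sum.union_disjoint) (use finite_ancestor_jobs ancestor_jobs_disjoint_own in auto)
  also have "(\<Sum>J\<in>(\<lambda>q. (i,r,q)) ` {..<njobs i}. job_size (fst J) * (\<Sum>z\<in>A. frac t J z))
      = (\<Sum>q<njobs i. job_size i * (\<Sum>z\<in>A. frac t (i,r,q) z))"
    by (subst sum.reindex) (auto simp: inj_on_def)
  finally show ?thesis .
qed

lemma ancestor_mass_Un:
  assumes "finite A" "finite A'" "A \<inter> A' = {}"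
  shows "ancestor_mass t i r (A \<union> A') = ancestor_mass t i r A + ancestor_mass t i r A'"
  unfolding ancestor_mass_def by (simp add: sum.union_disjoint[OF assms] distrib_left sum.distrib)

lemma excess_root: "excess t 0 0 = real k / 2 - B + 1/2"
  unfolding excess_def ancestor_mass_def ancestor_jobs_root threshold_def by (simp add: field_simps)

text \<open>While a leaf is active its machine carries its job of size \<open>1/2\<close> completely.\<close>

lemma excess_leaf:
  assumes r: "r < (2*h)^k"
  shows "excess (start k r) k r \<le> 0"
proof -
  define t where "t = start k r"
  define z where "z = block_index k r"
  have t: "t \<le> 2 * card Jobs" using window_end_le[OF order.refl r] span_leaf unfolding t_def by simp
  have leaf: "(k,r,0) \<in> Jobs" unfolding Jobs_def using r njobs_pos[of k] by auto
  have alive: "alive t J" if "J \<in> ancestor_jobs k r \<union> {(k,r,0)}" for J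
    using that ancestor_jobs_alive[of J k r t] span_leaf njobs_leaf
    unfolding t_def alive_def arrival_def departure_def by auto
  have "frac t (k,r,0) z = 1"
    using frac_sum_block[OF leaf alive t] block_leaf[of r] unfolding z_def by simp
  moreover have "(\<Sum>J\<in>ancestor_jobs k r \<union> {(k,r,0)}. job_size (fst J) * frac t J z)
      = ancestor_mass t k r {z} + job_size k * frac t (k,r,0) z"
    unfolding ancestor_mass_def
    by (subst sum.union_disjoint) (use finite_ancestor_jobs in \<open>auto simp: ancestor_jobs_def\<close>)
  moreover have "(\<Sum>J\<in>ancestor_jobs k r \<union> {(k,r,0)}. job_size (fst J) * frac t J z) \<le> B"
    by (rule alive_load_le_bound[OF t _ _ alive])
       (use leaf block_index_less[of k r] in \<open>auto simp: z_def machines_def ancestor_jobs_def\<close>)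
  ultimately have "ancestor_mass t k r {z} + 1/2 \<le> B" by (simp add: job_size_def)
  then show ?thesis unfolding excess_def threshold_def block_leaf z_def t_def by simp
qed

lemma own_mass_block:
  assumes "i < k" "r < (2*h)^i" "t \<le> 2 * card Jobs"
    "start i r + njobs i \<le> t + 1" "t < start i r + span i - njobs i"
  shows "(\<Sum>q<njobs i. job_size i * (\<Sum>z\<in>block i r. frac t (i,r,q) z)) = 2^(k - Suc i)"
proof -
  have "(\<Sum>z\<in>block i r. frac t (i,r,q) z) = 1" if "q < njobs i" for q
    using frac_sum_block own_alive[OF that assms(4,5)] assms(1-3) that unfolding Jobs_def by auto
  then show ?thesis using njobs_job_size[OF assms(1)] by simp
qed

text \<open>The threshold grows by \<open>1/2\<close> per level, and the jobs of \<open>(i, r)\<close>, all active during the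
  windows of its children, add exactly \<open>1/2\<close> to the average load of the two halves of its block.\<close>

lemma excess_siblings:
  assumes ik: "i < k" and r: "r < (2*h)^i" and p: "p < h"
  defines "t \<equiv> start i r + njobs i + (2*p+1) * span (Suc i) - 1"
  shows "excess t (Suc i) (r*(2*h)+2*p) + excess t (Suc i) (r*(2*h)+(2*p+1)) = 2 * excess t i r"
proof -
  have j0: "2*p < 2*h" and j1: "2*p+1 < 2*h" using p by auto
  have span_i: "span i = 2 * njobs i + 2*h * span (Suc i)" using span_Suc[OF ik] .
  have span2: "2 \<le> span (Suc i)" using span_ge_2 ik by simp
  have "(2*p+2) * span (Suc i) \<le> 2*h * span (Suc i)" using p by (intro mult_le_mono1) simp
  then have t_end: "t < start i r + span i - njobs i" unfolding t_def using span_i span2 by simp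
  have t_start: "start i r + njobs i \<le> t + 1" unfolding t_def using span2 by simp
  have t: "t \<le> 2 * card Jobs" using window_end_le[of i r] ik r t_end by simp
  define S0 where "S0 = block (Suc i) (r*(2*h)+2*p)"
  define S1 where "S1 = block (Suc i) (r*(2*h)+(2*p+1))"
  have halves: "block i r = S0 \<union> S1" "S0 \<inter> S1 = {}"
    unfolding S0_def S1_def block_child[OF ik j0] block_child[OF ik j1] by auto
  have fin: "finite S0" "finite S1" unfolding S0_def S1_def by (rule finite_block)+
  have "(\<Sum>q<njobs i. job_size i * (\<Sum>z\<in>S0. frac t (i,r,q) z))
      + (\<Sum>q<njobs i. job_size i * (\<Sum>z\<in>S1. frac t (i,r,q) z)) = 2^(k - Suc i)"
    using own_mass_block[OF ik r t t_start t_end]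
    unfolding halves(1) by (simp add: sum.union_disjoint[OF fin halves(2)] distrib_left sum.distrib)
  then have mass: "ancestor_mass t (Suc i) (r*(2*h)+2*p) S0 + ancestor_mass t (Suc i) (r*(2*h)+(2*p+1)) S1
      = ancestor_mass t i r (block i r) + 2^(k - Suc i)"
    using ancestor_mass_child[OF ik j0 r] ancestor_mass_child[OF ik j1 r]
      ancestor_mass_Un[OF fin halves(2)] halves(1) by simp
  define P :: real where "P = 2^(k - Suc i)"
  have P: "0 < P" "(2::real)^(k-i) = 2 * P"
    unfolding P_def using ik by (simp_all flip: power_Suc add: Suc_diff_Suc)
  have "excess t (Suc i) (r*(2*h)+2*p) + excess t (Suc i) (r*(2*h)+(2*p+1))
      = (ancestor_mass t (Suc i) (r*(2*h)+2*p) S0 + ancestor_mass t (Suc i) (r*(2*h)+(2*p+1)) S1) / P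
        - 2 * threshold (Suc i)"
    unfolding excess_def S0_def S1_def P_def by (simp add: add_divide_distrib)
  also have "\<dots> = (ancestor_mass t i r (block i r) + P) / P - 2 * threshold i - 1"
    unfolding mass P_def[symmetric] threshold_def by (simp add: field_simps)
  also have "\<dots> = 2 * excess t i r"
    unfolding excess_def P(2) using P(1) by (simp add: field_simps)
  finally show ?thesis .
qed

definition variation :: "nat \<Rightarrow> nat \<Rightarrow> real" where
  "variation i r = (\<Sum>s\<in>window i r. \<bar>excess s i r - excess (s - 1) i r\<bar>)"

definition excess_first :: "nat \<Rightarrow> nat \<Rightarrow> real" where
  "excess_first i r = excess (start i r - 1) i r"

definition excess_last :: "nat \<Rightarrow> nat \<Rightarrow> real" where
  "excess_last i r = excess (start i r + span i - 1) i r"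

lemma excess_diff_le_variation:
  assumes "start i r - 1 \<le> t1" "t1 \<le> t2" "t2 \<le> start i r + span i - 1"
  shows "\<bar>excess t2 i r - excess t1 i r\<bar> \<le> variation i r"
proof -
  have "\<bar>excess t2 i r - excess t1 i r\<bar> \<le> (\<Sum>s\<in>{Suc t1..t2}. \<bar>excess s i r - excess (s - 1) i r\<bar>)"
    by (rule abs_diff_le_sum_increments[OF assms(2)])
  also have "\<dots> \<le> variation i r" unfolding variation_def
    by (rule sum_mono2) (use assms start_pos[of i r] in auto)
  finally show ?thesis .
qed

lemma variation_root: "variation 0 0 = 0"
  unfolding variation_def using excess_root by simp

lemma excess_leaf_le_variation:
  assumes "r < (2*h)^k"
  shows "excess_first k r \<le> variation k r" "excess_last k r \<le> variation k r"
  using excess_leaf[OF assms] excess_diff_le_variation[of k r "start k r - 1" "start k r"]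
    excess_diff_le_variation[of k r "start k r" "start k r + span k - 1"] span_leaf
  unfolding excess_first_def excess_last_def by (auto simp: abs_le_iff)

lemma excess_sibling_pair:
  assumes ik: "i < k" and r: "r < (2*h)^i" and p: "p < h"
  shows "2 * (excess_first i r - variation i r)
      \<le> excess_last (Suc i) (r*(2*h)+2*p) + excess_first (Suc i) (r*(2*h)+(2*p+1))"
    "2 * (excess_last i r - variation i r)
      \<le> excess_last (Suc i) (r*(2*h)+2*p) + excess_first (Suc i) (r*(2*h)+(2*p+1))"
proof -
  have j0: "2*p < 2*h" and j1: "2*p+1 < 2*h" using p by auto
  define t where "t = start i r + njobs i + (2*p+1) * span (Suc i) - 1"
  have span2: "2 \<le> span (Suc i)" using span_ge_2 ik by simp
  have "excess_last (Suc i) (r*(2*h)+2*p) = excess t (Suc i) (r*(2*h)+2*p)"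
    unfolding excess_last_def t_def start_child[OF j0] using span2 by (simp add: algebra_simps)
  moreover have "excess_first (Suc i) (r*(2*h)+(2*p+1)) = excess t (Suc i) (r*(2*h)+(2*p+1))"
    unfolding excess_first_def t_def start_child[OF j1] by simp
  moreover have "(2*p+1) * span (Suc i) \<le> 2*h * span (Suc i)" using j1 by (intro mult_le_mono1) simp
  then have "start i r - 1 \<le> t" "t \<le> start i r + span i - 1"
    unfolding t_def using span_Suc[OF ik] span2 by auto
  then have "excess_first i r - variation i r \<le> excess t i r"
    "excess_last i r - variation i r \<le> excess t i r"
    using excess_diff_le_variation[of i r "start i r - 1" t]
      excess_diff_le_variation[of i r t "start i r + span i - 1"]
    unfolding excess_first_def excess_last_def by (auto simp: abs_le_iff)
  moreover have "excess t (Suc i) (r*(2*h)+2*p) + excess t (Suc i) (r*(2*h)+(2*p+1)) = 2 * excess t i r"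
    unfolding t_def by (rule excess_siblings[OF ik r p])
  ultimately show "2 * (excess_first i r - variation i r)
      \<le> excess_last (Suc i) (r*(2*h)+2*p) + excess_first (Suc i) (r*(2*h)+(2*p+1))"
    and "2 * (excess_last i r - variation i r)
      \<le> excess_last (Suc i) (r*(2*h)+2*p) + excess_first (Suc i) (r*(2*h)+(2*p+1))"
    by auto
qed

fun variation_tree :: "nat \<Rightarrow> nat \<Rightarrow> nat \<Rightarrow> real" where
  "variation_tree 0 i r = variation i r"
| "variation_tree (Suc m) i r = variation i r + (\<Sum>j<2*h. variation_tree m (Suc i) (r*(2*h)+j)) / (2*h)"

lemma excess_le_variation_tree:
  "i + m = k \<Longrightarrow> r < (2*h)^i \<Longrightarrow>
    excess_first i r \<le> variation_tree m i r \<and> excess_last i r \<le> variation_tree m i r"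
proof (induction m arbitrary: i r)
  case 0
  then show ?case using excess_leaf_le_variation by simp
next
  case (Suc m)
  then have ik: "i < k" and r: "r < (2*h)^i" by simp_all
  let ?F = "\<lambda>j. variation_tree m (Suc i) (r*(2*h)+j)"
  have child: "r*(2*h) + j < (2*h)^Suc i" if "j < 2*h" for j
  proof -
    have "r*(2*h) + j < (r+1)*(2*h)" using that by simp
    also have "\<dots> \<le> (2*h)^i * (2*h)" using r by (intro mult_right_mono) auto
    finally show ?thesis by (simp add: mult.commute)
  qed
  have pair: "2 * (excess_first i r - variation i r) \<le> ?F (2*p) + ?F (2*p+1) \<and>
      2 * (excess_last i r - variation i r) \<le> ?F (2*p) + ?F (2*p+1)" if "p < h" for p
  proof -
    have "excess_last (Suc i) (r*(2*h)+2*p) \<le> ?F (2*p)"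
      "excess_first (Suc i) (r*(2*h)+(2*p+1)) \<le> ?F (2*p+1)"
      using Suc.IH[of "Suc i"] Suc.prems child[of "2*p"] child[of "2*p+1"] that by auto
    then show ?thesis using excess_sibling_pair[OF ik r that] by (intro conjI; linarith)
  qed
  have sum_pairs: "(\<Sum>j<2*h. ?F j) = (\<Sum>p<h. ?F (2*p) + ?F (2*p+1))"
    by (rule sum_lessThan_double)
  have "(\<Sum>p<h. 2 * (excess_first i r - variation i r)) \<le> (\<Sum>j<2*h. ?F j)"
    unfolding sum_pairs by (rule sum_mono) (use pair in auto)
  moreover have "(\<Sum>p<h. 2 * (excess_last i r - variation i r)) \<le> (\<Sum>j<2*h. ?F j)"
    unfolding sum_pairs by (rule sum_mono) (use pair in auto)
  ultimately have "real h * (2 * (excess_first i r - variation i r)) \<le> (\<Sum>j<2*h. ?F j)"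
    "real h * (2 * (excess_last i r - variation i r)) \<le> (\<Sum>j<2*h. ?F j)"
    by simp_all
  then show ?case using h_ge_2 by (simp add: field_simps)
qed

lemma sum_variation_tree:
  "i + m = k \<Longrightarrow> (\<Sum>r<(2*h)^i. variation_tree m i r)
     = (\<Sum>i'\<in>{i..k}. (\<Sum>r'<(2*h)^i'. variation i' r') / (2*h)^(i'-i))"
proof (induction m arbitrary: i)
  case (Suc m)
  then have ik: "i < k" by simp
  have "(\<Sum>r<(2*h)^i. variation_tree (Suc m) i r) = (\<Sum>r<(2*h)^i. variation i r)
      + (\<Sum>r<(2*h)^i. \<Sum>j<2*h. variation_tree m (Suc i) (r*(2*h)+j)) / (2*h)"
    by (simp add: sum.distrib sum_divide_distrib)
  also have "(\<Sum>r<(2*h)^i. \<Sum>j<2*h. variation_tree m (Suc i) (r*(2*h)+j))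
      = (\<Sum>r'<(2*h)^Suc i. variation_tree m (Suc i) r')"
    using sum_lessThan_mult_split[of "variation_tree m (Suc i)" "2*h" "(2*h)^i"]
    by (simp only: power_Suc2)
  also have "\<dots> = (\<Sum>i'\<in>{Suc i..k}. (\<Sum>r'<(2*h)^i'. variation i' r') / (2*h)^(i' - Suc i))"
    using Suc.IH[of "Suc i"] Suc.prems by simp
  also have "\<dots> / (2*h) = (\<Sum>i'\<in>{Suc i..k}. (\<Sum>r'<(2*h)^i'. variation i' r') / (2*h)^(i' - Suc i) / (2*h))"
    by (rule sum_divide_distrib)
  also have "\<dots> = (\<Sum>i'\<in>{Suc i..k}. (\<Sum>r'<(2*h)^i'. variation i' r') / (2*h)^(i'-i))"
  proof (rule sum.cong[OF refl])
    fix i' assume "i' \<in> {Suc i..k}"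
    then have "i' - i = Suc (i' - Suc i)" by auto
    then show "(\<Sum>r'<(2*h)^i'. variation i' r') / (2*h)^(i' - Suc i) / (2*h)
        = (\<Sum>r'<(2*h)^i'. variation i' r') / (2*h)^(i'-i)"
      by (simp add: power_Suc2 del: power_Suc)
  qed
  finally show ?case using ik by (simp add: sum.atLeast_Suc_atMost[of i k])
qed simp

lemma variation_tree_root:
  "variation_tree k 0 0 = (\<Sum>i\<in>{1..k}. (\<Sum>r<(2*h)^i. variation i r) / (2*h)^i)"
  using sum_variation_tree[of 0 k] variation_root by (simp add: sum.atLeast_Suc_atMost)

definition job_recourse :: "nat \<Rightarrow> nat \<times> nat \<times> nat \<Rightarrow> real" where
  "job_recourse s J = (\<Sum>z\<in>machines. \<bar>frac s J z - frac (s-1) J z\<bar>) / 2"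

lemma job_recourse_nonneg: "0 \<le> job_recourse s J"
  unfolding job_recourse_def by (simp add: sum_nonneg)

lemma step_recourse_eq:
  "step_recourse machines (active (card Jobs) arr dep (s-1)) (active (card Jobs) arr dep s) (x (s-1)) (x s)
    = (\<Sum>J\<in>{J\<in>Jobs. alive (s-1) J \<and> alive s J}. job_recourse s J)"
proof -
  let ?X = "{J\<in>Jobs. alive (s-1) J \<and> alive s J}"
  have inj: "inj_on job_index ?X"
  proof (rule inj_onI)
    fix J1 J2 assume "J1 \<in> ?X" "J2 \<in> ?X" "job_index J1 = job_index J2"
    then show "J1 = J2" using job_index_inverse by (metis (no_types, lifting) mem_Collect_eq)
  qed
  have "active (card Jobs) arr dep (s-1) \<inter> active (card Jobs) arr dep s = job_index ` ?X"
  proof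
    show "job_index ` ?X \<subseteq> active (card Jobs) arr dep (s-1) \<inter> active (card Jobs) arr dep s"
      using job_index_active by auto
    show "active (card Jobs) arr dep (s-1) \<inter> active (card Jobs) arr dep s \<subseteq> job_index ` ?X"
    proof
      fix j assume "j \<in> active (card Jobs) arr dep (s-1) \<inter> active (card Jobs) arr dep s"
      then have "j < card Jobs" "job_enum j \<in> ?X" unfolding active_eq using job_enum_in_Jobs by auto
      then show "j \<in> job_index ` ?X" using job_index_job_enum by (intro image_eqI[of j]) simp_all
    qed
  qed
  then show ?thesis
    unfolding step_recourse_def job_recourse_def frac_def
    by (rule ssubst) (rule sum.reindex_cong[OF inj refl], simp)
qed

lemma total_recourse_eq:
  "total_recourse machines (card Jobs) arr dep x t
    = (\<Sum>s\<in>{1..t}. \<Sum>J\<in>Jobs. if alive (s-1) J \<and> alive s J then job_recourse s J else 0)"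
  unfolding total_recourse_def step_recourse_eq by (simp add: sum.inter_filter[OF finite_Jobs])

lemma block_mass_change_le_job_recourse:
  assumes "J \<in> Jobs" "alive s J" "alive (s-1) J" "s \<le> 2 * card Jobs"
  shows "\<bar>(\<Sum>z\<in>block i r. frac s J z) - (\<Sum>z\<in>block i r. frac (s-1) J z)\<bar> \<le> job_recourse s J"
  unfolding job_recourse_def
  by (rule abs_sum_subset_diff_le_half_l1)
     (use frac_props(2)[OF assms(1,2,4)] frac_props(2)[OF assms(1,3)] assms(4) block_subset
      in \<open>auto simp: machines_def\<close>)

lemma variation_le_recourse:
  assumes "i \<le> k" "r < (2*h)^i"
  shows "variation i r \<le>
    (\<Sum>s\<in>window i r. \<Sum>J\<in>ancestor_jobs i r. job_size (fst J) / 2^(k-i) * job_recourse s J)"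
  unfolding variation_def
proof (rule sum_mono)
  fix s assume s: "s \<in> window i r"
  then have s_le: "s \<le> 2 * card Jobs" using window_end_le[OF assms] by simp
  have "\<bar>excess s i r - excess (s-1) i r\<bar>
      = \<bar>ancestor_mass s i r (block i r) - ancestor_mass (s-1) i r (block i r)\<bar> / 2^(k-i)"
    unfolding excess_def by (simp add: diff_divide_distrib[symmetric])
  also have "\<dots> \<le> (\<Sum>J\<in>ancestor_jobs i r. job_size (fst J) * job_recourse s J) / 2^(k-i)"
  proof (rule divide_right_mono)
    have "\<bar>ancestor_mass s i r (block i r) - ancestor_mass (s-1) i r (block i r)\<bar>
        \<le> (\<Sum>J\<in>ancestor_jobs i r. job_size (fst J)
            * \<bar>(\<Sum>z\<in>block i r. frac s J z) - (\<Sum>z\<in>block i r. frac (s-1) J z)\<bar>)"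
      unfolding ancestor_mass_def sum_subtractf[symmetric] right_diff_distrib[symmetric]
      by (rule order_trans[OF sum_abs]) (simp add: abs_mult job_size_nonneg)
    also have "\<dots> \<le> (\<Sum>J\<in>ancestor_jobs i r. job_size (fst J) * job_recourse s J)"
    proof (rule sum_mono, rule mult_left_mono)
      fix J assume J: "J \<in> ancestor_jobs i r"
      have "J \<in> Jobs" using J unfolding ancestor_jobs_def by auto
      moreover have "alive s J" "alive (s-1) J"
        using ancestor_jobs_alive[OF J assms(1)] s span_ge_2[OF assms(1)] by auto
      ultimately show "\<bar>(\<Sum>z\<in>block i r. frac s J z) - (\<Sum>z\<in>block i r. frac (s-1) J z)\<bar>
          \<le> job_recourse s J"
        using block_mass_change_le_job_recourse s_le by simp
    qed (rule job_size_nonneg)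
    finally show "\<bar>ancestor_mass s i r (block i r) - ancestor_mass (s-1) i r (block i r)\<bar>
        \<le> (\<Sum>J\<in>ancestor_jobs i r. job_size (fst J) * job_recourse s J)" .
  qed simp
  also have "\<dots> = (\<Sum>J\<in>ancestor_jobs i r. job_size (fst J) / 2^(k-i) * job_recourse s J)"
    by (simp add: sum_divide_distrib)
  finally show "\<bar>excess s i r - excess (s-1) i r\<bar>
      \<le> (\<Sum>J\<in>ancestor_jobs i r. job_size (fst J) / 2^(k-i) * job_recourse s J)" .
qed

text \<open>Charging scheme: a step of job \<open>J\<close> at time \<open>s\<close> pays for the variation of every node below
  \<open>J\<close>'s node whose window contains \<open>s\<close>; there is at most one such node per level and the weights
  decrease geometrically with the level, so no step is charged more than its recourse.\<close>

definition weight :: "nat \<Rightarrow> real" where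
  "weight i = real h^(k - i + 1) / 2"

definition charge :: "nat \<Rightarrow> nat \<times> nat \<times> nat \<Rightarrow> real" where
  "charge s J = (\<Sum>i\<in>{1..k}. \<Sum>r<(2*h)^i.
     if s \<in> window i r \<and> J \<in> ancestor_jobs i r then weight i * job_size (fst J) else 0)"

lemma charge_alive:
  assumes "charge s J \<noteq> 0"
  shows "alive (s-1) J \<and> alive s J"
proof (rule ccontr)
  assume "\<not> (alive (s-1) J \<and> alive s J)"
  then have "\<not> (s \<in> window i r \<and> J \<in> ancestor_jobs i r)" if "i \<in> {1..k}" for i r
    using that ancestor_jobs_alive[of J i r] span_ge_2[of i] by auto
  then have "charge s J = 0" unfolding charge_def by (intro sum.neutral ballI) auto
  with assms show False ..
qed

lemma charge_level_le:
  assumes "(i,r,q) \<in> Jobs" "i' \<le> k"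
  shows "(\<Sum>r'<(2*h)^i'. if s \<in> window i' r' \<and> (i,r,q) \<in> ancestor_jobs i' r' then weight i' * job_size i else 0)
    \<le> (if i < i' then weight i' * job_size i else 0)"
proof (cases "i < i'")
  case True
  let ?R = "{r'. r' < (2*h)^i' \<and> s \<in> window i' r' \<and> (i,r,q) \<in> ancestor_jobs i' r'}"
  have "card ?R \<le> 1"
  proof (cases "?R = {}")
    case False
    then obtain r0 where r0: "r0 \<in> ?R" by blast
    then have "?R \<subseteq> {r0}" using windows_disjoint[OF assms(2), of r0] by blast
    then show ?thesis using card_mono[of "{r0}" ?R] by simp
  next
    case True
    show ?thesis unfolding True by simp
  qed
  moreover have "(\<Sum>r'<(2*h)^i'. if s \<in> window i' r' \<and> (i,r,q) \<in> ancestor_jobs i' r' then weight i' * job_size i else 0)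
      = real (card ?R) * (weight i' * job_size i)"
    by (simp add: sum.inter_filter[symmetric] lessThan_def conj_commute)
  moreover have "0 \<le> weight i' * job_size i" unfolding weight_def by (simp add: job_size_nonneg)
  ultimately show ?thesis
    using True mult_right_mono[of "real (card ?R)" 1 "weight i' * job_size i"] by simp
qed (auto simp: ancestor_jobs_def)

lemma weight_job_size: "i < i' \<Longrightarrow> i' \<le> k \<Longrightarrow> weight i' * job_size i = (1 / real h)^(i' - Suc i) / 2"
proof -
  assume i: "i < i'" "i' \<le> k"
  then have "k - i = (k - i' + 1) + (i' - Suc i)" by simp
  then have split: "(1 / real h)^(k-i) = (1 / real h)^(k - i' + 1) * (1 / real h)^(i' - Suc i)"
    by (simp only: power_add)
  have "real h^(k - i' + 1) * (1 / real h)^(k - i' + 1) = (real h * (1 / real h))^(k - i' + 1)"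
    by (simp only: power_mult_distrib)
  also have "\<dots> = 1" using h_ge_2 by simp
  finally have "real h^(k - i' + 1) * (1 / real h)^(k-i) = (1 / real h)^(i' - Suc i)"
    unfolding split by (simp only: mult.assoc[symmetric])
  then show ?thesis unfolding weight_def job_size_def using i by simp
qed

lemma charge_le_1:
  assumes "J \<in> Jobs"
  shows "charge s J \<le> 1"
proof -
  obtain i r q where J: "J = (i,r,q)" by (cases J)
  have "charge s J \<le> (\<Sum>i'\<in>{1..k}. if i < i' then weight i' * job_size i else 0)"
    unfolding charge_def J fst_conv by (rule sum_mono) (use charge_level_le assms J in auto)
  also have "\<dots> = (\<Sum>i'\<in>{Suc i..k}. (1 / real h)^(i' - Suc i) / 2)"
    by (simp add: sum.If_cases weight_job_size) (intro sum.cong; auto simp: weight_job_size)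
  also have "\<dots> \<le> 1"
  proof (cases "Suc i \<le> k")
    case True
    have "(\<Sum>i'\<in>{Suc i..k}. (1 / real h)^(i' - Suc i) / 2) = (\<Sum>m<Suc (k - Suc i). (1 / real h)^m) / 2"
      using sum.atLeastAtMost_shift_0[OF True, of "\<lambda>i'. (1 / real h)^(i' - Suc i) / 2"]
      by (simp add: comp_def sum_divide_distrib atLeast0AtMost lessThan_Suc_atMost)
    also have "\<dots> \<le> 2 / 2"
      using geometric_sum_le_2[of "1 / real h" "Suc (k - Suc i)"] h_ge_2
      by (intro divide_right_mono) (auto simp: field_simps)
    finally show ?thesis by simp
  qed simp
  finally show ?thesis .
qed

lemma weighted_variation_le:
  assumes "i \<in> {1..k}" "r < (2*h)^i"
  shows "real h / 2 * (2 * real h)^(k-i) * variation i r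
    \<le> (\<Sum>s\<in>{1..2 * card Jobs}. \<Sum>J\<in>Jobs. job_recourse s J *
         (if s \<in> window i r \<and> J \<in> ancestor_jobs i r then weight i * job_size (fst J) else 0))"
proof -
  have ik: "i \<le> k" using assms(1) by simp
  have W: "real h / 2 * (2 * real h)^(k-i) / 2^(k-i) = weight i"
    unfolding weight_def by (simp add: power_mult_distrib)
  have "real h / 2 * (2 * real h)^(k-i) * variation i r
      \<le> real h / 2 * (2 * real h)^(k-i) *
         (\<Sum>s\<in>window i r. \<Sum>J\<in>ancestor_jobs i r. job_size (fst J) / 2^(k-i) * job_recourse s J)"
    by (rule mult_left_mono[OF variation_le_recourse[OF ik assms(2)]]) simp
  also have "\<dots> = (\<Sum>s\<in>window i r. \<Sum>J\<in>ancestor_jobs i r. job_recourse s J * (weight i * job_size (fst J)))"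
    unfolding sum_distrib_left W[symmetric] by (intro sum.cong refl) (simp add: field_simps)
  also have "\<dots> = (\<Sum>s\<in>{1..2 * card Jobs}. \<Sum>J\<in>Jobs.
      if s \<in> window i r \<and> J \<in> ancestor_jobs i r then job_recourse s J * (weight i * job_size (fst J)) else 0)"
    using start_pos[of i r] window_end_le[OF ik assms(2)] finite_Jobs
    by (intro sum_sum_restrict[symmetric]) (auto simp: ancestor_jobs_def)
  finally show ?thesis by (simp add: if_distrib[of "times _"] cong: if_cong)
qed

lemma scaled_variation_tree_root:
  "real h / 2 * (2 * real h)^k * variation_tree k 0 0
    = (\<Sum>i\<in>{1..k}. \<Sum>r<(2*h)^i. real h / 2 * (2 * real h)^(k-i) * variation i r)"
  unfolding variation_tree_root sum_distrib_left
proof (intro sum.cong refl)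
  fix i assume "i \<in> {1..k}"
  then have "(k - i) + i = k" by simp
  then have "(2 * real h)^k = (2 * real h)^(k-i) * (2 * real h)^i" by (metis power_add)
  then have "real h / 2 * (2 * real h)^k / real ((2*h)^i) = real h / 2 * (2 * real h)^(k-i)"
    using h_ge_2 by simp
  moreover have "X * (S / D) = (X / D) * S" for X D S :: real by simp
  ultimately show "real h / 2 * (2 * real h)^k * ((\<Sum>r<(2*h)^i. variation i r) / (2*h)^i)
      = (\<Sum>r<(2*h)^i. real h / 2 * (2 * real h)^(k-i) * variation i r)"
    by (simp only: sum_distrib_left)
qed

lemma charged_recourse_le:
  assumes "J \<in> Jobs"
  shows "job_recourse s J * charge s J \<le> (if alive (s-1) J \<and> alive s J then job_recourse s J else 0)"
proof -
  have "job_recourse s J * charge s J \<le> job_recourse s J * 1"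
    by (rule mult_left_mono[OF charge_le_1[OF assms] job_recourse_nonneg])
  then show ?thesis using charge_alive[of s J] by (cases "charge s J = 0") auto
qed

lemma total_recourse_ge:
  "real h / 2 * (2 * real h)^k * (real k / 2 - B + 1/2) \<le> total_recourse machines (card Jobs) arr dep x (2 * card Jobs)"
proof -
  let ?I = "{1..2 * card Jobs}"
  have "real k / 2 - B + 1/2 \<le> variation_tree k 0 0"
    using excess_le_variation_tree[of 0 k 0] excess_root unfolding excess_first_def by simp
  then have "real h / 2 * (2 * real h)^k * (real k / 2 - B + 1/2) \<le> real h / 2 * (2 * real h)^k * variation_tree k 0 0"
    by (rule mult_left_mono) simp
  also have "\<dots> \<le> (\<Sum>i\<in>{1..k}. \<Sum>r<(2*h)^i. \<Sum>s\<in>?I. \<Sum>J\<in>Jobs. job_recourse s J *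
         (if s \<in> window i r \<and> J \<in> ancestor_jobs i r then weight i * job_size (fst J) else 0))"
    unfolding scaled_variation_tree_root by (intro sum_mono weighted_variation_le) auto
  also have "\<dots> = (\<Sum>s\<in>?I. \<Sum>J\<in>Jobs. job_recourse s J * charge s J)"
    unfolding sum_swap_nested charge_def sum_distrib_left ..
  also have "\<dots> \<le> (\<Sum>s\<in>?I. \<Sum>J\<in>Jobs. if alive (s-1) J \<and> alive s J then job_recourse s J else 0)"
    by (intro sum_mono charged_recourse_le)
  also have "\<dots> = total_recourse machines (card Jobs) arr dep x (2 * card Jobs)"
    by (rule total_recourse_eq[symmetric])
  finally show ?thesis .
qed

end

definition tree_size :: "nat \<Rightarrow> nat \<Rightarrow> nat" where
  "tree_size h k = (k + 2) * (2*h)^k div 2"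

lemma two_tree_size: "1 \<le> k \<Longrightarrow> 2 * tree_size h k = (k + 2) * (2*h)^k"
  unfolding tree_size_def by (cases k) auto

lemma (in tree_instance) card_Jobs_tree_size: "card Jobs = tree_size h k"
  using card_Jobs unfolding tree_size_def by simp

lemma (in tree_instance) amortized_recourse_ge:
  assumes "maintains_makespan machines (card Jobs) size_of allowed arr dep x B"
    and "amortized_recourse machines (card Jobs) arr dep x \<beta>"
  shows "real h * (real k / 2 - B + 1/2) / (2 * (real k + 2)) \<le> \<beta>"
proof -
  interpret bounded_run h k x B by unfold_locales (rule assms(1))
  have pos: "0 < (2 * real h)^k" using h_ge_2 by simp
  have n: "real (2 * card Jobs) = (real k + 2) * (2 * real h)^k"
    unfolding card_Jobs by (simp add: algebra_simps)
  have "0 < 2 * card Jobs" unfolding card_Jobs using h_ge_2 by simp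
  then have "2 * card Jobs \<in> {1..2 * card Jobs}" by simp
  then have "total_recourse machines (card Jobs) arr dep x (2 * card Jobs) \<le> \<beta> * ((real k + 2) * (2 * real h)^k)"
    using assms(2) n unfolding amortized_recourse_def by metis
  with total_recourse_ge have "real h / 2 * (real k / 2 - B + 1/2) * (2 * real h)^k
      \<le> \<beta> * (real k + 2) * (2 * real h)^k"
    by (simp add: algebra_simps)
  then have "real h / 2 * (real k / 2 - B + 1/2) \<le> \<beta> * (real k + 2)"
    using pos by (simp only: mult_le_cancel_right_pos)
  then show ?thesis by (simp add: field_simps)
qed

lemma tree_instance_recourse_bound:
  assumes "2 \<le> h"
  shows "\<exists>M p A arr dep. valid_instance M (tree_size h k) p A arr dep 1 \<and>
    (\<forall>x \<beta> B. maintains_makespan M (tree_size h k) p A arr dep x B \<and>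
       amortized_recourse M (tree_size h k) arr dep x \<beta> \<longrightarrow>
       real h * (real k / 2 - B + 1/2) / (2 * (real k + 2)) \<le> \<beta>)"
proof -
  interpret tree_instance h k using assms by unfold_locales
  show ?thesis
    using valid_instance_tree amortized_recourse_ge unfolding card_Jobs_tree_size by blast
qed

section \<open>Choice of parameters\<close>

lemma tree_size_ge:
  assumes "2 \<le> h" "1 \<le> k"
  shows "k \<le> tree_size h k" "2 * h \<le> tree_size h k"
proof -
  have "k < 2^k" by (rule less_exp)
  also have "(2::nat)^k \<le> (2*h)^k" using assms by (intro power_mono) auto
  finally have "k \<le> (2*h)^k" by simp
  moreover have "2*h \<le> (2*h)^k"
    using power_increasing[of 1 k "2*h"] assms by simp
  moreover have "2 * (2*h)^k \<le> 2 * tree_size h k"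
    unfolding two_tree_size[OF assms(2)] by (intro mult_right_mono) auto
  ultimately show "k \<le> tree_size h k" "2 * h \<le> tree_size h k" by simp_all
qed

lemma tree_size_mono:
  assumes "1 \<le> h" "k1 \<le> k2"
  shows "tree_size h k1 \<le> tree_size h k2"
proof -
  have "(2*h)^k1 \<le> (2*h)^k2" using assms by (intro power_increasing) auto
  then have "(k1 + 2) * (2*h)^k1 \<le> (k2 + 2) * (2*h)^k2" using assms(2) by (intro mult_le_mono) auto
  then show ?thesis unfolding tree_size_def by (rule div_le_mono)
qed

lemma ln_tree_size_le:
  assumes "2 \<le> h" "1 \<le> k"
  shows "ln (real (tree_size h k)) \<le> real k * (1 + ln (2 * real h))"
proof -
  have "real (2 * tree_size h k) = real ((k + 2) * (2*h)^k)"
    by (simp only: two_tree_size[OF assms(2)])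
  then have "real (tree_size h k) = (real k + 2) / 2 * (2 * real h)^k"
    by (simp add: algebra_simps)
  then have "ln (real (tree_size h k)) = ln ((real k + 2) / 2) + ln ((2 * real h)^k)"
    using assms by (simp only: ln_mult) simp
  also have "ln ((2 * real h)^k) = real k * ln (2 * real h)" by (rule ln_realpow)
  also have "ln ((real k + 2) / 2) \<le> (real k + 2) / 2 - 1"
    by (rule ln_le_minus_one) simp
  also have "(real k + 2) / 2 - 1 = real k / 2" by (simp add: field_simps)
  finally show ?thesis using assms by (simp add: algebra_simps)
qed

text \<open>With \<open>k \<approx> 4 a\<close> the bound of \<open>tree_instance_recourse_bound\<close> is at least \<open>h / 16\<close>, while
  \<open>n = tree_size h k \<le> (e \<cdot> 2h)\<^sup>k\<close>, so that \<open>n\<^bsup>1/(10 a)\<^esup> \<le> (6h)\<^sup>1\<^sup>/\<^sup>2\<close>.\<close>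

lemma tree_size_powr_le:
  fixes a :: real
  assumes h: "1536 \<le> h" and a: "1 \<le> a" "4 * a \<le> real k" "real k < 4 * a + 1"
  shows "real (tree_size h k) powr (1/10 / a) \<le> real h * (real k / 2 - a + 1/2) / (2 * (real k + 2))"
proof -
  have k: "1 \<le> k" using a by simp
  have "real h / 16 = real h * ((real k + 2) / 8) / (2 * (real k + 2))" by (simp add: field_simps)
  also have "\<dots> \<le> real h * (real k / 2 - a + 1/2) / (2 * (real k + 2))"
    using a by (intro divide_right_mono mult_left_mono) auto
  finally have lower: "real h / 16 \<le> real h * (real k / 2 - a + 1/2) / (2 * (real k + 2))" .
  have "ln (real (tree_size h k)) \<le> 5 * a * (1 + ln (2 * real h))"
    using ln_tree_size_le[of h k] mult_right_mono[of "real k" "5 * a" "1 + ln (2 * real h)"] a h k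
    by simp
  then have "1/10 / a * ln (real (tree_size h k)) \<le> (1 + ln (2 * real h)) / 2"
    using a by (simp add: field_simps)
  moreover have "0 < real (tree_size h k)" using tree_size_ge(1)[of h k] h k by simp
  ultimately have "real (tree_size h k) powr (1/10 / a) \<le> exp ((1 + ln (2 * real h)) / 2)"
    by (simp add: powr_def)
  also have "\<dots> \<le> real h / 16"
  proof (rule power2_le_imp_le)
    have "(exp ((1 + ln (2 * real h)) / 2))^2 = exp (1 + ln (2 * real h))"
      by (simp add: exp_double[symmetric] power2_eq_square exp_add[symmetric])
    also have "\<dots> = exp 1 * (2 * real h)" using h by (simp add: exp_add)
    also have "\<dots> \<le> 3 * (2 * real h)" using exp_le h by (intro mult_right_mono) auto
    also have "\<dots> \<le> (real h / 16)^2" using h by (simp add: power2_eq_square field_simps)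
    finally show "(exp ((1 + ln (2 * real h)) / 2))^2 \<le> (real h / 16)^2" .
  qed simp
  finally show ?thesis using lower by linarith
qed

text \<open>The least depth \<open>k\<close> with \<open>4 \<alpha>(n\<^sub>k) \<le> k\<close>; it exists because \<open>\<alpha> = o(log)\<close> and
  \<open>log n\<^sub>k = O(k)\<close>, and by minimality and monotonicity of \<open>\<alpha>\<close> it overshoots by less than one.\<close>

lemma depth_choice:
  fixes \<alpha> :: "nat \<Rightarrow> real"
  assumes "mono \<alpha>" "\<alpha> \<in> o(\<lambda>n. ln (real n))" "2 \<le> h"
  shows "\<exists>k\<ge>1. 4 * \<alpha> (tree_size h k) \<le> real k \<and>
    (2 \<le> k \<longrightarrow> real k < 4 * \<alpha> (tree_size h k) + 1)"
proof -
  define P where "P k \<longleftrightarrow> 1 \<le> k \<and> 4 * \<alpha> (tree_size h k) \<le> real k" for k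
  define \<epsilon> where "\<epsilon> = 1 / (4 * (1 + ln (2 * real h)))"
  have l: "0 < 1 + ln (2 * real h)" using assms(3) by (simp add: add_pos_nonneg)
  then have "0 < \<epsilon>" unfolding \<epsilon>_def by simp
  then obtain K where K: "\<And>n. K \<le> n \<Longrightarrow> norm (\<alpha> n) \<le> \<epsilon> * norm (ln (real n))"
    using landau_o.smallD[OF assms(2)] unfolding eventually_at_top_linorder by blast
  have "P (max 1 K)"
  proof -
    let ?k = "max 1 K"
    have "K \<le> tree_size h ?k" "1 \<le> tree_size h ?k"
      using tree_size_ge(1)[OF assms(3), of ?k] by auto
    then have "\<alpha> (tree_size h ?k) \<le> \<epsilon> * ln (real (tree_size h ?k))" using K by fastforce
    also have "\<dots> \<le> \<epsilon> * (real ?k * (1 + ln (2 * real h)))"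
      using ln_tree_size_le[OF assms(3), of ?k] \<open>0 < \<epsilon>\<close> by (intro mult_left_mono) auto
    also have "\<dots> = real ?k / 4" unfolding \<epsilon>_def using l by (simp add: field_simps)
    finally show ?thesis unfolding P_def by simp
  qed
  then have least: "P (LEAST k. P k)" by (rule LeastI)
  have "real (LEAST k. P k) < 4 * \<alpha> (tree_size h (LEAST k. P k)) + 1" if "2 \<le> (LEAST k. P k)"
  proof -
    let ?k = "LEAST k. P k"
    have "\<not> P (?k - 1)" by (rule not_less_Least) (use that in simp)
    moreover have "1 \<le> ?k - 1" using that by simp
    ultimately have "real (?k - 1) < 4 * \<alpha> (tree_size h (?k - 1))" unfolding P_def by simp
    moreover have "\<alpha> (tree_size h (?k - 1)) \<le> \<alpha> (tree_size h ?k)"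
      by (rule monoD[OF assms(1) tree_size_mono]) (use assms(3) in auto)
    moreover have "real (?k - 1) = real ?k - 1" using that by simp
    ultimately show ?thesis by simp
  qed
  then show ?thesis using least unfolding P_def by blast
qed

text \<open>For \<open>\<alpha>(n) < 1\<close> the claim is vacuous: with all \<open>n\<close> unit jobs active on a single machine
  no fractional schedule has makespan below \<open>T\<^sup>* = n\<close>.\<close>

lemma single_machine_instance:
  assumes "1 \<le> n"
  shows "valid_instance {0} n (\<lambda>_. 1) (\<lambda>_. {0}) Suc (\<lambda>j. n + Suc j) (real n)"
    and "a < 1 \<Longrightarrow> \<not> maintains_makespan {0} n (\<lambda>_. 1) (\<lambda>_. {0}) Suc (\<lambda>j. n + Suc j) x (a * real n)"
proof -
  have "Suc ` {..<n} \<union> (\<lambda>j. n + Suc j) ` {..<n} = {1..2*n}"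
  proof (intro equalityI subsetI)
    fix y assume "y \<in> {1..2*n}"
    then show "y \<in> Suc ` {..<n} \<union> (\<lambda>j. n + Suc j) ` {..<n}"
      using image_eqI[of y Suc "y - 1"] image_eqI[of y "\<lambda>j. n + Suc j" "y - n - 1"]
      by (cases "y \<le> n") auto
  qed auto
  then have "valid_events n Suc (\<lambda>j. n + Suc j)"
    unfolding valid_events_def by (auto simp: inj_on_def)
  moreover have "admits_schedule {0} (\<lambda>_. 1) (\<lambda>_. {0}) (active n Suc (\<lambda>j. n + Suc j) t) (real n)" for t
  proof -
    have "card {j \<in> active n Suc (\<lambda>j. n + Suc j) t. (0::nat) = 0} \<le> card {..<n}"
      by (rule card_mono) (auto simp: active_def)
    then show ?thesis unfolding admits_schedule_def by (intro exI[of _ "\<lambda>_. 0"]) auto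
  qed
  ultimately show "valid_instance {0} n (\<lambda>_. 1) (\<lambda>_. {0}) Suc (\<lambda>j. n + Suc j) (real n)"
    unfolding valid_instance_def by auto
  assume "a < 1"
  show "\<not> maintains_makespan {0} n (\<lambda>_. 1) (\<lambda>_. {0}) Suc (\<lambda>j. n + Suc j) x (a * real n)"
  proof
    assume "maintains_makespan {0} n (\<lambda>_. 1) (\<lambda>_. {0}) Suc (\<lambda>j. n + Suc j) x (a * real n)"
    then have "frac_schedule {0} (\<lambda>_. {0}) (active n Suc (\<lambda>j. n + Suc j) n) (x n)"
      and "makespan {0} (\<lambda>_. 1) (active n Suc (\<lambda>j. n + Suc j) n) (x n) \<le> a * real n"
      unfolding maintains_makespan_def by simp_all
    moreover have "active n Suc (\<lambda>j. n + Suc j) n = {..<n}" unfolding active_def by auto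
    ultimately have "\<forall>j<n. x n j 0 = 1" "(\<Sum>j<n. x n j 0) \<le> a * real n"
      unfolding frac_schedule_def makespan_def frac_load_def by simp_all
    then have "real n \<le> a * real n" by simp
    then show False using \<open>a < 1\<close> assms by simp
  qed
qed

lemma hard_instance:
  fixes a :: real
  assumes "1536 \<le> h" "1 \<le> k" "4 * a \<le> real k" "2 \<le> k \<Longrightarrow> real k < 4 * a + 1"
  shows "\<exists>M p A arr dep T. valid_instance M (tree_size h k) p A arr dep T \<and>
    (\<forall>x \<beta>. maintains_makespan M (tree_size h k) p A arr dep x (a * T) \<and>
       amortized_recourse M (tree_size h k) arr dep x \<beta> \<longrightarrow> \<beta> \<ge> real (tree_size h k) powr (1/10 / a))"
proof (cases "a < 1")
  case True
  have "1 \<le> tree_size h k" using tree_size_ge(1)[of h k] assms(1,2) by simp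
  then show ?thesis using single_machine_instance[of "tree_size h k"] True by blast
next
  case False
  then have bound: "real (tree_size h k) powr (1/10 / a) \<le> real h * (real k / 2 - a + 1/2) / (2 * (real k + 2))"
    using tree_size_powr_le[OF assms(1)] assms(2-4) by simp
  obtain M p A arr dep where "valid_instance M (tree_size h k) p A arr dep 1"
    and recourse: "\<forall>x \<beta> B. maintains_makespan M (tree_size h k) p A arr dep x B \<and>
      amortized_recourse M (tree_size h k) arr dep x \<beta> \<longrightarrow>
      real h * (real k / 2 - B + 1/2) / (2 * (real k + 2)) \<le> \<beta>"
    using tree_instance_recourse_bound[of h k] assms(1) by auto
  moreover have "\<beta> \<ge> real (tree_size h k) powr (1/10 / a)"
    if "maintains_makespan M (tree_size h k) p A arr dep x (a * 1) \<and>
      amortized_recourse M (tree_size h k) arr dep x \<beta>" for x \<beta>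
    using recourse that bound by force
  ultimately show ?thesis by blast
qed

theorem theorem9:
  fixes \<alpha> :: "nat \<Rightarrow> real"
  assumes "mono \<alpha>"
    and "\<alpha> \<in> o(\<lambda>n. ln (real n))"
  shows "\<exists>c>0. \<forall>N. \<exists>n\<ge>N. \<exists>M p A arr dep T.
           valid_instance M n p A arr dep T \<and>
           (\<forall>x \<beta>. maintains_makespan M n p A arr dep x (\<alpha> n * T) \<and>
                   amortized_recourse M n arr dep x \<beta> \<longrightarrow>
                   \<beta> \<ge> real n powr (c / \<alpha> n))"
proof (intro exI[of _ "1/10"] conjI allI)
  fix N :: nat
  define h where "h = max N 1536"
  then have h: "2 \<le> h" "1536 \<le> h" "N \<le> h" by auto
  obtain k where "1 \<le> k" "4 * \<alpha> (tree_size h k) \<le> real k"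
    "2 \<le> k \<Longrightarrow> real k < 4 * \<alpha> (tree_size h k) + 1"
    using depth_choice[OF assms h(1)] by blast
  moreover from this have "N \<le> tree_size h k" using tree_size_ge(2)[OF h(1)] h(3) by fastforce
  ultimately show "\<exists>n\<ge>N. \<exists>M p A arr dep T. valid_instance M n p A arr dep T \<and>
      (\<forall>x \<beta>. maintains_makespan M n p A arr dep x (\<alpha> n * T) \<and>
        amortized_recourse M n arr dep x \<beta> \<longrightarrow> \<beta> \<ge> real n powr (1/10 / \<alpha> n))"
    using hard_instance[OF h(2)] by blast
qed simp

end
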